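(* Consider two distinct regions $A$ and $B$ containing $N_A$ and $N_B$ voxels. For each voxel $i$ of $A$ the observed variable is $Y_i^A = X_i^A + \epsilon_i^A$ (latent signal plus noise), and similarly $Y_j^B = X_j^B+\epsilon_j^B$ for voxels $j$ of $B$. Assume $\mathrm{Var}(X_i^A)=\sigma_A^2>0$, $\mathrm{Var}(\epsilon_i^A)=\gamma_A^2$ for all $i$, and $\mathrm{Var}(X_j^B)=\sigma_B^2>0$, $\mathrm{Var}(\epsilon_j^B)=\gamma_B^2$ for all $j$; the noise variables are uncorrelated with each other (within and across regions) and uncorrelated with all latent variables; $\eta^A_{i,i'}=\mathrm{Cor}(X_i^A,X_{i'}^A)$ and $\eta^B_{j,j'}=\mathrm{Cor}(X_j^B,X_{j'}^B)$ denote the (arbitrary) latent intra-correlations; and $\mathrm{Cor}(X_i^A,X_j^B)=\rho^{A,B}$ for all $i,j$. Suppose one observes $n$ i.i.d. (over $t=1,\dots,n$) copies $Y_i^A(t)$, $Y_j^B(t)$ of the whole vector of observed variables, so in particular $\mathrm{Cov}(Y_i^A(t),Y_j^B(t))=\rho^{A,B}\sigma_A\sigma_B$, and write $\mathbf{Y}_i^A=(Y_i^A(1),\dots,Y_i^A(n))$. Fix nonempty sets of voxels (clusters) $\nu_A$ in $A$ and $\nu_B$ in $B$, and define $\overline{\mathbf{Y}}^{\nu_A}=|\nu_A|^{-1}\sum_{i\in\nu_A}\mathbf{Y}_i^A$, $\overline{\mathbf{Y}}^{\nu_B}=|\nu_B|^{-1}\sum_{j\in\nu_B}\mathbf{Y}_j^B$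 and $r^{CLA}_{\nu_A,\nu_B}=\widehat{Cor}(\overline{\mathbf{Y}}^{\nu_A},\overline{\mathbf{Y}}^{\nu_B})$. Then, as $n\to\infty$, $$r^{CLA}_{\nu_A,\nu_B}\xrightarrow{a.s.}\rho^{CLA}_{\nu_A,\nu_B}:=\frac{\rho^{A,B}}{\sqrt{\left[\frac{1}{|\nu_A|^2}\sum_{i,i'\in\nu_A}\eta^A_{i,i'}+\frac{\gamma_A^2}{|\nu_A|\sigma_A^2}\right]\left[\frac{1}{|\nu_B|^2}\sum_{j,j'\in\nu_B}\eta^B_{j,j'}+\frac{\gamma_B^2}{|\nu_B|\sigma_B^2}\right]}}.$$
   Context: Sample correlation: for $\mathbf{a},\mathbf{b}\in\mathbb{R}^n$ with means $\bar a,\bar b$, let $\mathbf{a}^c=\mathbf{a}-\bar a\mathbf{1}_n$, $\mathbf{b}^c=\mathbf{b}-\bar b\mathbf{1}_n$; $\widehat{Cov}(\mathbf{a},\mathbf{b})=n^{-1}\langle\mathbf{a}^c,\mathbf{b}^c\rangle$, $\widehat{Var}(\mathbf{a})=n^{-1}\|\mathbf{a}^c\|^2$, $\widehat{Cor}(\mathbf{a},\mathbf{b})=\widehat{Cov}(\mathbf{a},\mathbf{b})/\sqrt{\widehat{Var}(\mathbf{a})\widehat{Var}(\mathbf{b})}$. All variables have finite second moments. *)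

theory Defs
  imports "HOL-Probability.Probability"
begin

definition pcov :: "'a measure \<Rightarrow> ('a \<Rightarrow> real) \<Rightarrow> ('a \<Rightarrow> real) \<Rightarrow> real" where
  "pcov M X Y = (\<integral>\<omega>. (X \<omega> - (\<integral>x. X x \<partial>M)) * (Y \<omega> - (\<integral>x. Y x \<partial>M)) \<partial>M)"

definition pvar :: "'a measure \<Rightarrow> ('a \<Rightarrow> real) \<Rightarrow> real" where
  "pvar M X = pcov M X X"

definition pcor :: "'a measure \<Rightarrow> ('a \<Rightarrow> real) \<Rightarrow> ('a \<Rightarrow> real) \<Rightarrow> real" where
  "pcor M X Y = pcov M X Y / sqrt (pvar M X * pvar M Y)"

definition smean :: "nat \<Rightarrow> (nat \<Rightarrow> real) \<Rightarrow> real" where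
  "smean n a = (\<Sum>t<n. a t) / real n"

definition scov :: "nat \<Rightarrow> (nat \<Rightarrow> real) \<Rightarrow> (nat \<Rightarrow> real) \<Rightarrow> real" where
  "scov n a b = (\<Sum>t<n. (a t - smean n a) * (b t - smean n b)) / real n"

definition svar :: "nat \<Rightarrow> (nat \<Rightarrow> real) \<Rightarrow> real" where
  "svar n a = (\<Sum>t<n. (a t - smean n a)^2) / real n"

definition scor :: "nat \<Rightarrow> (nat \<Rightarrow> real) \<Rightarrow> (nat \<Rightarrow> real) \<Rightarrow> real" where
  "scor n a b = scov n a b / sqrt (svar n a * svar n b)"

text \<open>The whole observed vector at time t, indexed by voxels Inl i of A and Inr j of B.\<close>
definition obsvec :: "nat \<Rightarrow> nat \<Rightarrow> (nat \<Rightarrow> 'a \<Rightarrow> real) \<Rightarrow> (nat \<Rightarrow> 'a \<Rightarrow> real)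
    \<Rightarrow> 'a \<Rightarrow> (nat + nat \<Rightarrow> real)" where
  "obsvec NA NB YA YB \<omega> = (\<lambda>k\<in>{..<NA} <+> {..<NB}. case k of Inl i \<Rightarrow> YA i \<omega> | Inr j \<Rightarrow> YB j \<omega>)"

end

theory Submission
  imports Defs
begin

text \<open>
  The cluster means \<open>a\<^sub>t\<close>, \<open>b\<^sub>t\<close> of the observations at time \<open>t\<close> are measurable functions of
  the i.i.d. observation vectors. By the strong law of large numbers their empirical first and
  second moments converge almost surely to the population moments, and the sample correlation, a
  continuous function of these moments, converges to \<open>Cor(a\<^sub>0, b\<^sub>0)\<close>. Bilinearity of the
  covariance and the uncorrelatedness of the noise give \<open>Cov(a\<^sub>0, b\<^sub>0) = \<rho> \<sigma>\<^sub>A \<sigma>\<^sub>B\<close> and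
  \<open>Var(a\<^sub>0) = \<sigma>\<^sub>A\<^sup>2 (\<Sum> \<eta>\<^sup>A / |\<nu>\<^sub>A|\<^sup>2 + \<gamma>\<^sub>A\<^sup>2 / (|\<nu>\<^sub>A| \<sigma>\<^sub>A\<^sup>2))\<close>, which is the claimed limit.

  The strong law itself is proved for integrable i.i.d. variables by Etemadi's argument: split into
  positive and negative parts, truncate the \<open>k\<close>-th summand at level \<open>k + 1\<close> (by Borel--Cantelli
  this changes only finitely many summands), get convergence along the geometric subsequences
  \<open>\<lceil>a\<^sup>m\<rceil>\<close> from Chebyshev's inequality and Borel--Cantelli, and interpolate between consecutive
  terms of such a subsequence using that the partial sums are monotone.
\<close>

section \<open>Covariance calculus\<close>

lemma abs_mult_le_sum_squares: "\<bar>a * b\<bar> \<le> a^2 + (b::real)^2"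
proof -
  have "0 \<le> (\<bar>a\<bar> - \<bar>b\<bar>)^2" by simp
  then have "2 * (\<bar>a\<bar> * \<bar>b\<bar>) \<le> a^2 + b^2" by (simp add: power2_diff)
  moreover have "0 \<le> \<bar>a\<bar> * \<bar>b\<bar>" by simp
  ultimately have "\<bar>a\<bar> * \<bar>b\<bar> \<le> a^2 + b^2" by linarith
  then show ?thesis by (simp add: abs_mult)
qed

lemma integrable_mult_of_square_integrable:
  fixes f g :: "'a \<Rightarrow> real"
  assumes [measurable]: "f \<in> borel_measurable M" "g \<in> borel_measurable M"
    and "integrable M (\<lambda>x. (f x)^2)" "integrable M (\<lambda>x. (g x)^2)"
  shows "integrable M (\<lambda>x. f x * g x)"
proof (rule Bochner_Integration.integrable_bound[where f="\<lambda>x. (f x)^2 + (g x)^2"])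
  show "integrable M (\<lambda>x. (f x)^2 + (g x)^2)" using assms by simp
  show "AE x in M. norm (f x * g x) \<le> norm ((f x)^2 + (g x)^2)"
    by (simp add: abs_mult_le_sum_squares)
qed measurable

lemma integrable_square_add:
  fixes f g :: "'a \<Rightarrow> real"
  assumes "f \<in> borel_measurable M" "g \<in> borel_measurable M"
    and "integrable M (\<lambda>x. (f x)^2)" "integrable M (\<lambda>x. (g x)^2)"
  shows "integrable M (\<lambda>x. (f x + g x)^2)"
  using assms integrable_mult_of_square_integrable[OF assms]
  by (simp add: power2_sum mult.assoc)

lemma integrable_square_sum:
  fixes f :: "'i \<Rightarrow> 'a \<Rightarrow> real"
  assumes "finite I" "\<And>i. i \<in> I \<Longrightarrow> f i \<in> borel_measurable M"
    and "\<And>i. i \<in> I \<Longrightarrow> integrable M (\<lambda>x. (f i x)^2)"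
  shows "integrable M (\<lambda>x. (\<Sum>i\<in>I. f i x)^2)"
  using assms
proof (induction I rule: finite_induct)
  case (insert i I)
  then have "integrable M (\<lambda>x. (f i x + (\<Sum>i\<in>I. f i x))^2)"
    by (intro integrable_square_add borel_measurable_sum) auto
  with insert show ?case by simp
qed simp

context prob_space
begin

lemma pcov_eq_expectation:
  fixes f g :: "'a \<Rightarrow> real"
  assumes [measurable]: "f \<in> borel_measurable M" "g \<in> borel_measurable M"
    and f2: "integrable M (\<lambda>x. (f x)^2)" and g2: "integrable M (\<lambda>x. (g x)^2)"
  shows "pcov M f g = expectation (\<lambda>x. f x * g x) - expectation f * expectation g"
proof -
  have fi: "integrable M f" by (rule square_integrable_imp_integrable) (use f2 in auto)
  have gi: "integrable M g" by (rule square_integrable_imp_integrable) (use g2 in auto)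
  have fgi: "integrable M (\<lambda>x. f x * g x)" by (rule integrable_mult_of_square_integrable) (use f2 g2 in auto)
  define a where "a = expectation f"
  define b where "b = expectation g"
  have "pcov M f g = expectation (\<lambda>x. (f x * g x - b * f x) - (a * g x - a * b))"
    unfolding pcov_def a_def[symmetric] b_def[symmetric]
    by (rule Bochner_Integration.integral_cong) (auto simp: algebra_simps)
  also have "\<dots> = expectation (\<lambda>x. f x * g x - b * f x) - expectation (\<lambda>x. a * g x - a * b)"
    by (rule Bochner_Integration.integral_diff) (use fi gi fgi in auto)
  also have "expectation (\<lambda>x. f x * g x - b * f x) = expectation (\<lambda>x. f x * g x) - b * a"
    using fi fgi by (simp add: a_def)
  also have "expectation (\<lambda>x. a * g x - a * b) = 0"
    using gi by (simp add: b_def prob_space)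
  finally show ?thesis unfolding a_def b_def by (simp add: algebra_simps)
qed

lemma pcov_commute: "pcov M f g = pcov M g f"
  unfolding pcov_def by (simp add: mult.commute)

lemma variance_eq_pvar: "variance f = pvar M f"
  unfolding pvar_def pcov_def by (simp add: power2_eq_square)

lemma pcov_divide: "pcov M (\<lambda>x. f x / c) (\<lambda>x. g x / d) = pcov M f g / (c * d)"
proof -
  have "pcov M (\<lambda>x. f x / c) (\<lambda>x. g x / d)
      = (\<integral>x. (f x - expectation f) * (g x - expectation g) / (c * d) \<partial>M)"
    unfolding pcov_def Bochner_Integration.integral_divide_zero[of M f c]
      Bochner_Integration.integral_divide_zero[of M g d]
    by (rule Bochner_Integration.integral_cong) (simp_all add: diff_divide_distrib[symmetric])
  also have "\<dots> = pcov M f g / (c * d)"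
    unfolding pcov_def by (rule Bochner_Integration.integral_divide_zero)
  finally show ?thesis .
qed

lemma pcov_sum:
  fixes f :: "'i \<Rightarrow> 'a \<Rightarrow> real" and g :: "'j \<Rightarrow> 'a \<Rightarrow> real"
  assumes fin: "finite I" "finite J"
    and f: "\<And>i. i \<in> I \<Longrightarrow> f i \<in> borel_measurable M" "\<And>i. i \<in> I \<Longrightarrow> integrable M (\<lambda>x. (f i x)^2)"
    and g: "\<And>j. j \<in> J \<Longrightarrow> g j \<in> borel_measurable M" "\<And>j. j \<in> J \<Longrightarrow> integrable M (\<lambda>x. (g j x)^2)"
  shows "pcov M (\<lambda>x. \<Sum>i\<in>I. f i x) (\<lambda>x. \<Sum>j\<in>J. g j x) = (\<Sum>i\<in>I. \<Sum>j\<in>J. pcov M (f i) (g j))"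
proof -
  have int_f: "integrable M (f i)" if "i \<in> I" for i
    by (rule square_integrable_imp_integrable[OF f(1)[OF that] f(2)[OF that]])
  have int_g: "integrable M (g j)" if "j \<in> J" for j
    by (rule square_integrable_imp_integrable[OF g(1)[OF that] g(2)[OF that]])
  have int_fg: "integrable M (\<lambda>x. f i x * g j x)" if "i \<in> I" "j \<in> J" for i j
    by (rule integrable_mult_of_square_integrable[OF f(1)[OF that(1)] g(1)[OF that(2)] f(2)[OF that(1)] g(2)[OF that(2)]])
  have "pcov M (\<lambda>x. \<Sum>i\<in>I. f i x) (\<lambda>x. \<Sum>j\<in>J. g j x)
      = expectation (\<lambda>x. (\<Sum>i\<in>I. f i x) * (\<Sum>j\<in>J. g j x))
        - expectation (\<lambda>x. \<Sum>i\<in>I. f i x) * expectation (\<lambda>x. \<Sum>j\<in>J. g j x)"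
    by (intro pcov_eq_expectation borel_measurable_sum integrable_square_sum fin f g)
  also have "expectation (\<lambda>x. (\<Sum>i\<in>I. f i x) * (\<Sum>j\<in>J. g j x))
      = (\<Sum>i\<in>I. \<Sum>j\<in>J. expectation (\<lambda>x. f i x * g j x))"
    using int_fg by (simp add: sum_product Bochner_Integration.integrable_sum)
  also have "expectation (\<lambda>x. \<Sum>i\<in>I. f i x) * expectation (\<lambda>x. \<Sum>j\<in>J. g j x)
      = (\<Sum>i\<in>I. \<Sum>j\<in>J. expectation (f i) * expectation (g j))"
    using int_f int_g by (simp add: sum_product)
  also have "(\<Sum>i\<in>I. \<Sum>j\<in>J. expectation (\<lambda>x. f i x * g j x)) - \<dots>
      = (\<Sum>i\<in>I. \<Sum>j\<in>J. pcov M (f i) (g j))"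
    unfolding sum_subtractf[symmetric] by (intro sum.cong refl pcov_eq_expectation[symmetric] f g)
  finally show ?thesis .
qed

lemma pvar_sum_uncorrelated:
  fixes f :: "'i \<Rightarrow> 'a \<Rightarrow> real"
  assumes "finite I" "\<And>i. i \<in> I \<Longrightarrow> f i \<in> borel_measurable M" "\<And>i. i \<in> I \<Longrightarrow> integrable M (\<lambda>x. (f i x)^2)"
    and uncorrelated: "\<And>i j. i \<in> I \<Longrightarrow> j \<in> I \<Longrightarrow> i \<noteq> j \<Longrightarrow> pcov M (f i) (f j) = 0"
  shows "pvar M (\<lambda>x. \<Sum>i\<in>I. f i x) = (\<Sum>i\<in>I. pvar M (f i))"
proof -
  have "pvar M (\<lambda>x. \<Sum>i\<in>I. f i x) = (\<Sum>i\<in>I. \<Sum>j\<in>I. pcov M (f i) (f j))"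
    unfolding pvar_def using assms by (intro pcov_sum) auto
  also have "\<dots> = (\<Sum>i\<in>I. \<Sum>j\<in>{i}. pcov M (f i) (f j))"
    using assms by (intro sum.cong refl sum.mono_neutral_right) auto
  finally show ?thesis by (simp add: pvar_def)
qed

lemma pcov_indep_eq_0:
  fixes Z :: "'i \<Rightarrow> 'a \<Rightarrow> real"
  assumes indep: "indep_vars (\<lambda>_. borel) Z I" and ij: "i \<in> I" "j \<in> I" "i \<noteq> j"
    and sq: "integrable M (\<lambda>x. (Z i x)^2)" "integrable M (\<lambda>x. (Z j x)^2)"
  shows "pcov M (Z i) (Z j) = 0"
proof -
  have m: "Z i \<in> borel_measurable M" "Z j \<in> borel_measurable M"
    using indep ij unfolding indep_vars_def by auto
  have "indep_vars (\<lambda>_. borel) Z {i, j}"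
    by (rule indep_vars_subset[OF indep]) (use ij in auto)
  then have "expectation (\<lambda>x. \<Prod>k\<in>{i, j}. Z k x) = (\<Prod>k\<in>{i, j}. expectation (Z k))"
    by (rule indep_vars_lebesgue_integral[rotated]) (use m sq square_integrable_imp_integrable in auto)
  then show ?thesis using pcov_eq_expectation[OF m sq] ij(3) by simp
qed

lemma pcov_add_left:
  fixes f g h :: "'a \<Rightarrow> real"
  assumes m: "f \<in> borel_measurable M" "g \<in> borel_measurable M" "h \<in> borel_measurable M"
    and s: "integrable M (\<lambda>x. (f x)^2)" "integrable M (\<lambda>x. (g x)^2)" "integrable M (\<lambda>x. (h x)^2)"
  shows "pcov M (\<lambda>x. f x + g x) h = pcov M f h + pcov M g h"
proof -
  have i: "integrable M f" "integrable M g"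
    using square_integrable_imp_integrable m s by auto
  have "integrable M (\<lambda>x. f x * h x)" "integrable M (\<lambda>x. g x * h x)"
    using integrable_mult_of_square_integrable m s by auto
  then have "expectation (\<lambda>x. (f x + g x) * h x) = expectation (\<lambda>x. f x * h x) + expectation (\<lambda>x. g x * h x)"
    by (simp add: distrib_right)
  moreover have "expectation (\<lambda>x. f x + g x) = expectation f + expectation g" using i by simp
  moreover have "pcov M (\<lambda>x. f x + g x) h
      = expectation (\<lambda>x. (f x + g x) * h x) - expectation (\<lambda>x. f x + g x) * expectation h"
    using m s by (intro pcov_eq_expectation integrable_square_add) auto
  ultimately show ?thesis using pcov_eq_expectation[OF m(1,3) s(1,3)] pcov_eq_expectation[OF m(2,3) s(2,3)]
    by (simp add: algebra_simps)
qed

lemma pcov_of_pcor: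
  assumes "pvar M f = s^2" "pvar M g = s'^2" "s > 0" "s' > 0"
  shows "pcov M f g = pcor M f g * (s * s')"
  using assms by (simp add: pcor_def real_sqrt_mult)

end

section \<open>The strong law of large numbers\<close>

lemma tendsto_cesaro_mean:
  fixes a :: "nat \<Rightarrow> real"
  assumes "a \<longlonglongrightarrow> L"
  shows "(\<lambda>n. (\<Sum>k<n. a k) / real n) \<longlonglongrightarrow> L"
proof (rule LIMSEQ_I)
  fix r :: real assume r: "0 < r"
  from LIMSEQ_D[OF assms, of "r/2"] r
  obtain N where N: "\<And>k. k \<ge> N \<Longrightarrow> norm (a k - L) < r/2" by auto
  define C where "C = (\<Sum>k<N. \<bar>a k - L\<bar>)"
  obtain N2 :: nat where N2: "real N2 > 2 * C / r" using reals_Archimedean2 by blast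
  show "\<exists>no. \<forall>n\<ge>no. norm ((\<Sum>k<n. a k) / real n - L) < r"
  proof (intro exI[of _ "Suc (N + N2)"] allI impI)
    fix n assume n: "Suc (N + N2) \<le> n"
    then have n_pos: "real n > 0" by simp
    have split: "(\<Sum>k<n. a k - L) = (\<Sum>k<N. a k - L) + (\<Sum>k\<in>{N..<n}. a k - L)"
      using n by (simp add: lessThan_atLeast0 sum.atLeastLessThan_concat)
    have head: "\<bar>\<Sum>k<N. a k - L\<bar> \<le> C" unfolding C_def by (rule sum_abs)
    have "\<bar>\<Sum>k\<in>{N..<n}. a k - L\<bar> \<le> (\<Sum>k\<in>{N..<n}. \<bar>a k - L\<bar>)" by (rule sum_abs)
    also have "\<dots> \<le> (\<Sum>k\<in>{N..<n}. r/2)" using N by (intro sum_mono) (simp add: less_imp_le)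
    also have "\<dots> \<le> real n * (r/2)" using r by simp
    finally have tail: "\<bar>\<Sum>k\<in>{N..<n}. a k - L\<bar> \<le> real n * (r/2)" .
    have "real n > 2 * C / r" using N2 n by linarith
    then have "C < real n * (r/2)" using r by (simp add: field_simps)
    then have "\<bar>\<Sum>k<n. a k - L\<bar> < real n * r" using head tail split by linarith
    moreover have "(\<Sum>k<n. a k) / real n - L = (\<Sum>k<n. a k - L) / real n"
      using n_pos by (simp add: sum_subtractf field_simps)
    ultimately show "norm ((\<Sum>k<n. a k) / real n - L) < r"
      using n_pos by (simp add: field_simps)
  qed
qed

lemma sum_Suc_less_indicator_le:
  fixes x :: real
  assumes "0 \<le> x"
  shows "(\<Sum>k<K. if real (Suc k) < x then 1 else 0) \<le> min x (real K)"
proof (induction K)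
  case 0 then show ?case using assms by simp
next
  case (Suc K) then show ?case by (auto simp: min_def split: if_splits)
qed

lemma sum_powers_below_le:
  fixes r z :: real
  assumes r: "0 < r" "r < 1"
  shows "(\<Sum>m<M. if r^m < z then r^m else 0) \<le> max 0 (z - r^M) / (1 - r)"
proof (induction M)
  case 0 then show ?case using r by simp
next
  case (Suc M)
  show ?case
  proof (cases "r^M < z")
    case True
    have "(\<Sum>m<Suc M. if r^m < z then r^m else 0) \<le> (z - r^M) / (1 - r) + r^M"
      using Suc True by simp
    also have "\<dots> = (z - r^Suc M) / (1 - r)" using r by (simp add: field_simps)
    also have "\<dots> \<le> max 0 (z - r^Suc M) / (1 - r)" using r by (intro divide_right_mono) auto
    finally show ?thesis .
  next
    case False
    then have "(\<Sum>m<M. if r^m < z then r^m else 0) \<le> 0"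
      using Suc r by (simp add: max_def split: if_splits)
    then have "(\<Sum>m<Suc M. if r^m < z then r^m else 0) \<le> 0" using False by simp
    also have "0 \<le> max 0 (z - r^Suc M) / (1 - r)" using r by simp
    finally show ?thesis .
  qed
qed

definition geom_ceil :: "real \<Rightarrow> nat \<Rightarrow> nat" where
  "geom_ceil a m = nat \<lceil>a ^ m\<rceil>"

lemma geom_ceil_0 [simp]: "geom_ceil a 0 = 1"
  unfolding geom_ceil_def by simp

lemma real_geom_ceil: "a > 1 \<Longrightarrow> real (geom_ceil a m) = of_int \<lceil>a ^ m\<rceil>"
  unfolding geom_ceil_def by (simp add: zero_le_ceiling less_le_trans[OF _ one_le_power])

lemma geom_ceil_ge: "a > 1 \<Longrightarrow> a ^ m \<le> real (geom_ceil a m)"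
  using real_geom_ceil[of a m] le_of_int_ceiling[of "a ^ m"] by simp

lemma geom_ceil_less: "a > 1 \<Longrightarrow> real (geom_ceil a m) < a ^ m + 1"
  using real_geom_ceil[of a m] of_int_ceiling_le_add_one[of "a ^ m"] ceiling_correct[of "a ^ m"]
  by linarith

lemma geom_ceil_pos: "a > 1 \<Longrightarrow> 1 \<le> geom_ceil a m"
proof -
  assume a: "a > 1"
  have "1 \<le> a ^ m" using a by simp
  also have "\<dots> \<le> real (geom_ceil a m)" by (rule geom_ceil_ge[OF a])
  finally show ?thesis by simp
qed

lemma geom_ceil_mono: "a > 1 \<Longrightarrow> m \<le> m' \<Longrightarrow> geom_ceil a m \<le> geom_ceil a m'"
  unfolding geom_ceil_def by (intro nat_mono ceiling_mono power_increasing) auto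

lemma geom_ceil_unbounded: "a > 1 \<Longrightarrow> \<exists>m. n < geom_ceil a m"
proof -
  assume a: "a > 1"
  obtain m where "real n < a ^ m" using real_arch_pow[OF a] by blast
  with geom_ceil_ge[OF a, of m] show ?thesis by (intro exI[of _ m]) linarith
qed

lemma filterlim_geom_ceil: "a > 1 \<Longrightarrow> filterlim (geom_ceil a) at_top sequentially"
proof -
  assume a: "a > 1"
  show ?thesis unfolding filterlim_at_top eventually_sequentially
  proof
    fix N
    obtain m where "N < geom_ceil a m" using geom_ceil_unbounded[OF a] by blast
    then show "\<exists>m. \<forall>n\<ge>m. N \<le> geom_ceil a n"
      using geom_ceil_mono[OF a] by (meson less_imp_le order_trans)
  qed
qed

lemma geom_ceil_ratio_le: "a > 1 \<Longrightarrow> real (geom_ceil a (Suc m)) / real (geom_ceil a m) \<le> a + 1 / a ^ m"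
proof -
  assume a: "a > 1"
  then have "0 < a ^ m" by simp
  then have "real (geom_ceil a (Suc m)) / real (geom_ceil a m) \<le> (a ^ Suc m + 1) / a ^ m"
    using geom_ceil_less[OF a, of "Suc m"] geom_ceil_ge[OF a, of m] by (intro frac_le) auto
  also have "\<dots> = a + 1 / a ^ m" using \<open>0 < a ^ m\<close> by (simp add: add_divide_distrib)
  finally show ?thesis .
qed

lemma geom_ceil_bracket:
  assumes "a > 1" "1 \<le> n"
  shows "\<exists>m. geom_ceil a m \<le> n \<and> n < geom_ceil a (Suc m)"
proof -
  define j where "j = (LEAST j. n < geom_ceil a j)"
  have j: "n < geom_ceil a j" unfolding j_def by (rule LeastI_ex[OF geom_ceil_unbounded[OF assms(1)]])
  moreover have "j \<noteq> 0" using j assms(2) by (intro notI) simp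
  then obtain m where "j = Suc m" using not0_implies_Suc by blast
  moreover have "\<not> n < geom_ceil a m"
    using not_less_Least[of m "\<lambda>j. n < geom_ceil a j"] \<open>j = Suc m\<close> unfolding j_def by simp
  ultimately show ?thesis by (intro exI[of _ m]) simp
qed

definition trunc :: "real \<Rightarrow> real \<Rightarrow> real" where
  "trunc c x = (if x \<le> c then x else 0)"

lemma trunc_nonneg: "0 \<le> x \<Longrightarrow> 0 \<le> trunc c x"
  and trunc_le: "0 \<le> x \<Longrightarrow> trunc c x \<le> x"
  and trunc_le_level: "0 \<le> c \<Longrightarrow> trunc c x \<le> c"
  unfolding trunc_def by auto

lemma borel_measurable_trunc [measurable]: "trunc c \<in> borel_measurable borel"
  unfolding trunc_def by measurable

text \<open>This makes the Chebyshev bounds along \<open>geom_ceil a\<close> summable.\<close>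

lemma sum_trunc_sq_geom_ceil_le:
  assumes a: "a > 1" and x: "0 \<le> x"
  shows "(\<Sum>m<M. (trunc (geom_ceil a m) x)^2 / geom_ceil a m) \<le> 2 * a / (a - 1) * x"
proof (cases "x = 0")
  case True then show ?thesis by (simp add: trunc_def)
next
  case False
  with x have x_pos: "x > 0" by simp
  define r where "r = 1 / a"
  have r: "0 < r" "r < 1" using a unfolding r_def by auto
  have term_le: "(trunc (geom_ceil a m) x)^2 / geom_ceil a m \<le> x^2 * (if r^m < 2/x then r^m else 0)" for m
  proof (cases "x \<le> real (geom_ceil a m)")
    case True
    have am: "1 \<le> a ^ m" using a by simp
    have "x < 2 * a ^ m" using True geom_ceil_less[OF a, of m] am by linarith
    then have "r ^ m < 2 / x" unfolding r_def using x_pos am by (simp add: power_one_over field_simps)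
    moreover have "1 / real (geom_ceil a m) \<le> r ^ m" unfolding r_def power_one_over
      using geom_ceil_ge[OF a, of m] am by (intro divide_left_mono) auto
    then have "x^2 / real (geom_ceil a m) \<le> x^2 * r^m"
      using mult_left_mono[of "1 / real (geom_ceil a m)" "r^m" "x^2"] by simp
    ultimately show ?thesis using True by (simp add: trunc_def)
  qed (use r in \<open>simp add: trunc_def\<close>)
  have "(\<Sum>m<M. (trunc (geom_ceil a m) x)^2 / geom_ceil a m) \<le> (\<Sum>m<M. x^2 * (if r^m < 2/x then r^m else 0))"
    by (intro sum_mono term_le)
  also have "\<dots> = x^2 * (\<Sum>m<M. if r^m < 2/x then r^m else 0)" by (simp add: sum_distrib_left)
  also have "\<dots> \<le> x^2 * (max 0 (2/x - r^M) / (1 - r))"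
    by (intro mult_left_mono sum_powers_below_le r) simp
  also have "\<dots> \<le> x^2 * ((2/x) / (1 - r))"
    using r x_pos by (intro mult_left_mono divide_right_mono) auto
  also have "\<dots> = 2 * a / (a - 1) * x" unfolding r_def using a x_pos by (simp add: field_simps power2_eq_square)
  finally show ?thesis .
qed

lemma incseq_ratio_bounds:
  fixes s :: "nat \<Rightarrow> real" and C \<delta> \<mu> :: real
  assumes s: "incseq s" "\<And>n. 0 \<le> s n" and k: "0 < k" "k \<le> n" "n \<le> k'" "real k' \<le> C * k"
    and close: "\<bar>s k / k - \<mu>\<bar> < \<delta>" "\<bar>s k' / k' - \<mu>\<bar> < \<delta>"
  shows "(\<mu> - \<delta>) / C \<le> s n / n \<and> s n / n \<le> (\<mu> + \<delta>) * C"
proof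
  have "real k \<le> C * k" using k by linarith
  then have C: "1 \<le> C" using k by simp
  have mono: "s k \<le> s n" "s n \<le> s k'" using s(1) k by (simp_all add: incseqD)
  have "(\<mu> - \<delta>) / C \<le> s k / k / C" using close(1) C by (intro divide_right_mono) auto
  also have "\<dots> = s k / (C * k)" by simp
  also have "\<dots> \<le> s k / k'" using k C s(2)[of k] by (intro divide_left_mono) auto
  also have "\<dots> \<le> s n / n" using k mono s(2)[of k] by (intro frac_le) auto
  finally show "(\<mu> - \<delta>) / C \<le> s n / n" .
  have "s n / n \<le> s k' / k" using k mono s(2)[of n] by (intro frac_le) auto
  also have "\<dots> = s k' / k' * (k' / k)" using k by simp
  also have "\<dots> \<le> s k' / k' * C" using k s(2)[of k'] by (intro mult_left_mono) (simp_all add: divide_le_eq)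
  also have "\<dots> \<le> (\<mu> + \<delta>) * C" using close(2) C by (intro mult_right_mono) auto
  finally show "s n / n \<le> (\<mu> + \<delta>) * C" .
qed

text \<open>The bounds are crude; all that matters is that they tend to \<open>\<mu>\<close> as \<open>a \<rightarrow> 1\<close>.\<close>

lemma eventually_ratio_bounds_geom_ceil:
  fixes s :: "nat \<Rightarrow> real"
  assumes a: "a > 1" and s: "incseq s" "\<And>n. 0 \<le> s n"
    and lim: "(\<lambda>m. s (geom_ceil a m) / geom_ceil a m) \<longlonglongrightarrow> \<mu>"
  shows "\<forall>\<^sub>F n in sequentially.
    (\<mu> - (a - 1)) / (2 * a - 1) \<le> s n / n \<and> s n / n \<le> (\<mu> + (a - 1)) * (2 * a - 1)"
proof -
  let ?k = "geom_ceil a"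
  have "\<forall>\<^sub>F m in sequentially. \<bar>s (?k m) / ?k m - \<mu>\<bar> < a - 1 \<and> 1 / a ^ m < a - 1"
  proof (intro eventually_conj)
    show "\<forall>\<^sub>F m in sequentially. \<bar>s (?k m) / ?k m - \<mu>\<bar> < a - 1"
      using LIMSEQ_D[OF lim, of "a - 1"] a unfolding eventually_sequentially by simp
    have "(\<lambda>m. 1 / a ^ m) \<longlonglongrightarrow> 0"
      using LIMSEQ_realpow_zero[of "1 / a"] a by (simp add: power_one_over)
    then show "\<forall>\<^sub>F m in sequentially. 1 / a ^ m < a - 1"
      using a by (intro order_tendstoD) auto
  qed
  then obtain M where M: "\<And>m. m \<ge> M \<Longrightarrow> \<bar>s (?k m) / ?k m - \<mu>\<bar> < a - 1 \<and> 1 / a ^ m < a - 1"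
    unfolding eventually_sequentially by blast
  show ?thesis unfolding eventually_sequentially
  proof (intro exI[of _ "?k M"] allI impI)
    fix n assume n: "?k M \<le> n"
    then have "1 \<le> n" using geom_ceil_pos[OF a, of M] by linarith
    then obtain m where m: "?k m \<le> n" "n < ?k (Suc m)" using geom_ceil_bracket[OF a] by blast
    have "M \<le> m"
      using geom_ceil_mono[OF a, of "Suc m" M] n m(2) by (cases "M \<le> m") auto
    have k_pos: "0 < real (?k m)" using geom_ceil_pos[OF a, of m] by simp
    have "real (?k (Suc m)) / ?k m \<le> 2 * a - 1"
      using geom_ceil_ratio_le[OF a, of m] M[OF \<open>M \<le> m\<close>] by simp
    then have "real (?k (Suc m)) \<le> (2 * a - 1) * ?k m" using k_pos by (simp add: divide_le_eq)
    then show "(\<mu> - (a - 1)) / (2 * a - 1) \<le> s n / n \<and> s n / n \<le> (\<mu> + (a - 1)) * (2 * a - 1)"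
      using k_pos m M[OF \<open>M \<le> m\<close>] M[of "Suc m"] \<open>M \<le> m\<close>
      by (intro incseq_ratio_bounds[OF s]) auto
  qed
qed

lemma LIMSEQ_of_eventually_bounds:
  fixes x L U :: "nat \<Rightarrow> real"
  assumes "\<And>q. \<forall>\<^sub>F n in sequentially. L q \<le> x n \<and> x n \<le> U q"
    and "L \<longlonglongrightarrow> \<mu>" "U \<longlonglongrightarrow> \<mu>"
  shows "x \<longlonglongrightarrow> \<mu>"
proof (rule order_tendstoI)
  fix y assume "y < \<mu>"
  with assms(2) have "\<forall>\<^sub>F q in sequentially. y < L q" by (rule order_tendstoD)
  then obtain q where "y < L q" unfolding eventually_sequentially by blast
  with assms(1)[of q] show "\<forall>\<^sub>F n in sequentially. y < x n" by (auto elim: eventually_mono)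
next
  fix y assume "\<mu> < y"
  with assms(3) have "\<forall>\<^sub>F q in sequentially. U q < y" by (rule order_tendstoD)
  then obtain q where "U q < y" unfolding eventually_sequentially by blast
  with assms(1)[of q] show "\<forall>\<^sub>F n in sequentially. x n < y" by (auto elim: eventually_mono)
qed

lemma LIMSEQ_ratio_of_geom_ceil_subsequences:
  fixes s :: "nat \<Rightarrow> real" and a :: "nat \<Rightarrow> real"
  assumes s: "incseq s" "\<And>n. 0 \<le> s n" and a: "\<And>q. a q > 1" "a \<longlonglongrightarrow> 1"
    and lim: "\<And>q. (\<lambda>m. s (geom_ceil (a q) m) / geom_ceil (a q) m) \<longlonglongrightarrow> \<mu>"
  shows "(\<lambda>n. s n / n) \<longlonglongrightarrow> \<mu>"
proof (rule LIMSEQ_of_eventually_bounds)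
  show "\<forall>\<^sub>F n in sequentially.
      (\<mu> - (a q - 1)) / (2 * a q - 1) \<le> s n / n \<and> s n / n \<le> (\<mu> + (a q - 1)) * (2 * a q - 1)" for q
    by (rule eventually_ratio_bounds_geom_ceil[OF a(1) s lim])
  show "(\<lambda>q. (\<mu> - (a q - 1)) / (2 * a q - 1)) \<longlonglongrightarrow> \<mu>"
    using a(2) by (auto intro!: tendsto_eq_intros)
  show "(\<lambda>q. (\<mu> + (a q - 1)) * (2 * a q - 1)) \<longlonglongrightarrow> \<mu>"
    using a(2) by (auto intro!: tendsto_eq_intros)
qed

locale iid_nonneg = prob_space +
  fixes X :: "nat \<Rightarrow> 'a \<Rightarrow> real"
  assumes indep_X: "indep_vars (\<lambda>_. borel) X UNIV"
    and distr_X: "\<And>t. distr M borel (X t) = distr M borel (X 0)"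
    and X_nonneg: "\<And>t \<omega>. 0 \<le> X t \<omega>"
    and integrable_X0: "integrable M (X 0)"
begin

lemma measurable_X [measurable]: "X t \<in> borel_measurable M"
  using indep_X unfolding indep_vars_def by auto

lemma integral_comp_X:
  fixes h :: "real \<Rightarrow> real"
  assumes "h \<in> borel_measurable borel"
  shows "(\<integral>\<omega>. h (X t \<omega>) \<partial>M) = (\<integral>\<omega>. h (X 0 \<omega>) \<partial>M)"
  using integral_distr[OF measurable_X assms, of t] integral_distr[OF measurable_X assms, of 0]
  by (simp add: distr_X[of t])

lemma prob_X_vimage:
  assumes "A \<in> sets borel"
  shows "prob (X t -` A \<inter> space M) = prob (X 0 -` A \<inter> space M)"
  using measure_distr[OF measurable_X assms, of t] measure_distr[OF measurable_X assms, of 0]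
  by (simp add: distr_X[of t])

definition XT :: "nat \<Rightarrow> 'a \<Rightarrow> real" where
  "XT k \<omega> = trunc (Suc k) (X k \<omega>)"

lemma measurable_XT [measurable]: "XT k \<in> borel_measurable M"
  unfolding XT_def by measurable

lemma XT_nonneg: "0 \<le> XT k \<omega>" and XT_le: "XT k \<omega> \<le> Suc k"
  unfolding XT_def by (simp_all add: trunc_nonneg trunc_le_level X_nonneg)

lemma integrable_XT: "integrable M (XT k)"
  by (rule integrable_const_bound[where B="Suc k"]) (use XT_nonneg XT_le in auto)

lemma integrable_XT_square: "integrable M (\<lambda>\<omega>. (XT k \<omega>)^2)"
  by (rule integrable_const_bound[where B="(Suc k)^2"]) (use XT_nonneg XT_le in \<open>auto intro: power_mono\<close>)

lemma indep_XT: "indep_vars (\<lambda>_. borel) XT UNIV"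
  unfolding XT_def[abs_def] by (rule indep_vars_compose2[OF indep_X, where Y="\<lambda>k. trunc (Suc k)"]) simp

lemma AE_eventually_X_eq_XT: "AE \<omega> in M. \<forall>\<^sub>F k in sequentially. X k \<omega> = XT k \<omega>"
proof -
  define A where "A k = X k -` {real (Suc k)<..} \<inter> space M" for k
  have A_sets [measurable]: "A k \<in> sets M" for k unfolding A_def by measurable
  have indicator_integrable: "integrable M (\<lambda>\<omega>. if real (Suc k) < X 0 \<omega> then 1 else 0 :: real)" for k
    by (rule integrable_const_bound[where B=1]) simp_all
  have prob_A: "prob (A k) = expectation (\<lambda>\<omega>. if real (Suc k) < X 0 \<omega> then 1 else 0)" for k
  proof -
    have "prob (A k) = prob (X 0 -` {real (Suc k)<..} \<inter> space M)"
      unfolding A_def by (rule prob_X_vimage) simp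
    also have "\<dots> = expectation (indicator (X 0 -` {real (Suc k)<..} \<inter> space M))"
      by simp
    also have "\<dots> = expectation (\<lambda>\<omega>. if real (Suc k) < X 0 \<omega> then 1 else 0)"
      by (rule Bochner_Integration.integral_cong) (auto simp: indicator_def)
    finally show ?thesis .
  qed
  have "(\<Sum>k<K. prob (A k)) \<le> expectation (X 0)" for K
  proof -
    have "(\<Sum>k<K. prob (A k)) = expectation (\<lambda>\<omega>. \<Sum>k<K. if real (Suc k) < X 0 \<omega> then 1 else 0)"
      unfolding prob_A by (rule Bochner_Integration.integral_sum[symmetric]) (rule indicator_integrable)
    also have "\<dots> \<le> expectation (X 0)"
      using sum_Suc_less_indicator_le[OF X_nonneg[of 0]] indicator_integrable integrable_X0
      by (intro Bochner_Integration.integral_mono) auto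
    finally show ?thesis .
  qed
  then have "summable (\<lambda>k. prob (A k))"
    by (intro summableI_nonneg_bounded[where x="expectation (X 0)"]) auto
  with borel_cantelli_AE1[OF A_sets]
  have "AE \<omega> in M. \<forall>\<^sub>F k in sequentially. \<omega> \<in> space M - A k"
    by (simp add: emeasure_eq_measure)
  then show ?thesis
    by (rule AE_mp) (auto intro!: AE_I2 elim!: eventually_mono simp: A_def XT_def trunc_def)
qed

lemma expectation_XT_tendsto: "(\<lambda>k. expectation (XT k)) \<longlonglongrightarrow> expectation (X 0)"
proof -
  have "(\<lambda>k. expectation (\<lambda>\<omega>. trunc (Suc k) (X 0 \<omega>))) \<longlonglongrightarrow> expectation (X 0)"
  proof (rule integral_dominated_convergence[where w="X 0"])
    show "AE \<omega> in M. (\<lambda>k. trunc (Suc k) (X 0 \<omega>)) \<longlonglongrightarrow> X 0 \<omega>"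
    proof (rule AE_I2)
      fix \<omega>
      obtain N :: nat where "X 0 \<omega> \<le> N" using real_arch_simple by blast
      then have "\<forall>\<^sub>F k in sequentially. trunc (Suc k) (X 0 \<omega>) = X 0 \<omega>"
        unfolding eventually_sequentially trunc_def by (intro exI[of _ N]) auto
      then show "(\<lambda>k. trunc (Suc k) (X 0 \<omega>)) \<longlonglongrightarrow> X 0 \<omega>" by (rule tendsto_eventually)
    qed
  qed (simp_all add: integrable_X0 trunc_nonneg trunc_le X_nonneg)
  then show ?thesis
    unfolding XT_def by (subst integral_comp_X) simp_all
qed

lemma integrable_trunc_X0_square: "0 \<le> c \<Longrightarrow> integrable M (\<lambda>\<omega>. (trunc c (X 0 \<omega>))^2)"
  by (rule integrable_const_bound[where B="c^2"]) (auto simp: trunc_def X_nonneg intro: power_mono)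

definition S :: "nat \<Rightarrow> 'a \<Rightarrow> real" where
  "S n \<omega> = (\<Sum>k<n. XT k \<omega>)"

lemma measurable_S [measurable]: "S n \<in> borel_measurable M"
  unfolding S_def by measurable

lemma expectation_S: "expectation (S n) = (\<Sum>k<n. expectation (XT k))"
  unfolding S_def[abs_def] by (rule Bochner_Integration.integral_sum) (rule integrable_XT)

lemma expectation_S_ratio_tendsto: "(\<lambda>n. expectation (S n) / n) \<longlonglongrightarrow> expectation (X 0)"
  unfolding expectation_S by (rule tendsto_cesaro_mean[OF expectation_XT_tendsto])

lemma variance_S_le: "variance (S n) \<le> n * expectation (\<lambda>\<omega>. (trunc n (X 0 \<omega>))^2)"
proof -
  have "variance (S n) = (\<Sum>k<n. pvar M (XT k))"
    unfolding variance_eq_pvar S_def[abs_def]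
    by (intro pvar_sum_uncorrelated pcov_indep_eq_0[OF indep_XT] integrable_XT_square) auto
  also have "\<dots> \<le> (\<Sum>k<n. expectation (\<lambda>\<omega>. (trunc n (X 0 \<omega>))^2))"
  proof (intro sum_mono)
    fix k assume "k \<in> {..<n}"
    have "pvar M (XT k) = expectation (\<lambda>\<omega>. (XT k \<omega>)^2) - (expectation (XT k))^2"
      using pcov_eq_expectation[OF measurable_XT measurable_XT integrable_XT_square integrable_XT_square]
      unfolding pvar_def by (simp add: power2_eq_square)
    also have "\<dots> \<le> expectation (\<lambda>\<omega>. (trunc (Suc k) (X 0 \<omega>))^2)"
      unfolding XT_def by (subst integral_comp_X) simp_all
    also have "\<dots> \<le> expectation (\<lambda>\<omega>. (trunc n (X 0 \<omega>))^2)"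
      using \<open>k \<in> {..<n}\<close> integrable_trunc_X0_square
      by (intro Bochner_Integration.integral_mono) (auto simp: trunc_def)
    finally show "pvar M (XT k) \<le> expectation (\<lambda>\<omega>. (trunc n (X 0 \<omega>))^2)" .
  qed
  finally show ?thesis by simp
qed

lemma prob_S_deviation_le:
  fixes e :: real
  assumes "e > 0" "n > 0"
  shows "prob {\<omega>\<in>space M. e * n \<le> \<bar>S n \<omega> - expectation (S n)\<bar>}
    \<le> expectation (\<lambda>\<omega>. (trunc n (X 0 \<omega>))^2 / n) / e^2"
proof -
  have "integrable M (\<lambda>\<omega>. (S n \<omega>)^2)"
    unfolding S_def by (intro integrable_square_sum integrable_XT_square) auto
  then have "prob {\<omega>\<in>space M. e * n \<le> \<bar>S n \<omega> - expectation (S n)\<bar>} \<le> variance (S n) / (e * n)^2"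
    using assms by (intro Chebyshev_inequality) auto
  also have "\<dots> \<le> n * expectation (\<lambda>\<omega>. (trunc n (X 0 \<omega>))^2) / (e * n)^2"
    by (intro divide_right_mono variance_S_le) simp
  also have "\<dots> = expectation (\<lambda>\<omega>. (trunc n (X 0 \<omega>))^2 / n) / e^2"
    using assms by (simp add: power2_eq_square field_simps)
  finally show ?thesis .
qed

lemma AE_eventually_S_geom_ceil_close:
  fixes e :: real
  assumes a: "a > 1" and e: "e > 0"
  shows "AE \<omega> in M. \<forall>\<^sub>F m in sequentially.
    \<bar>S (geom_ceil a m) \<omega> - expectation (S (geom_ceil a m))\<bar> < e * geom_ceil a m"
proof -
  let ?k = "geom_ceil a"
  define B where "B m = {\<omega>\<in>space M. e * ?k m \<le> \<bar>S (?k m) \<omega> - expectation (S (?k m))\<bar>}" for m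
  have B_sets [measurable]: "B m \<in> sets M" for m unfolding B_def by measurable
  have integrable_trunc: "integrable M (\<lambda>\<omega>. (trunc (?k m) (X 0 \<omega>))^2 / ?k m)" for m
    using integrable_trunc_X0_square[of "?k m"] by simp
  have "(\<Sum>m<K. prob (B m)) \<le> expectation (\<lambda>\<omega>. 2 * a / (a - 1) * X 0 \<omega>) / e^2" for K
  proof -
    have "(\<Sum>m<K. prob (B m)) \<le> (\<Sum>m<K. expectation (\<lambda>\<omega>. (trunc (?k m) (X 0 \<omega>))^2 / ?k m) / e^2)"
      unfolding B_def using geom_ceil_pos[OF a] e by (intro sum_mono prob_S_deviation_le) (auto simp: Suc_le_eq)
    also have "\<dots> = expectation (\<lambda>\<omega>. \<Sum>m<K. (trunc (?k m) (X 0 \<omega>))^2 / ?k m) / e^2"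
      unfolding sum_divide_distrib[symmetric]
      by (subst Bochner_Integration.integral_sum) (simp_all only: integrable_trunc)
    also have "\<dots> \<le> expectation (\<lambda>\<omega>. 2 * a / (a - 1) * X 0 \<omega>) / e^2"
      using integrable_trunc integrable_X0 sum_trunc_sq_geom_ceil_le[OF a X_nonneg]
      by (intro divide_right_mono Bochner_Integration.integral_mono) auto
    finally show ?thesis .
  qed
  then have "summable (\<lambda>m. prob (B m))"
    by (intro summableI_nonneg_bounded) auto
  with borel_cantelli_AE1[OF B_sets]
  have "AE \<omega> in M. \<forall>\<^sub>F m in sequentially. \<omega> \<in> space M - B m"
    by (simp add: emeasure_eq_measure)
  then show ?thesis
    by (rule AE_mp) (auto intro!: AE_I2 elim!: eventually_mono simp: B_def)
qed

lemma AE_S_geom_ceil_tendsto: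
  assumes a: "a > 1"
  shows "AE \<omega> in M. (\<lambda>m. S (geom_ceil a m) \<omega> / geom_ceil a m) \<longlonglongrightarrow> expectation (X 0)"
proof -
  let ?k = "geom_ceil a"
  have "AE \<omega> in M. \<forall>\<^sub>F m in sequentially.
      \<bar>S (?k m) \<omega> - expectation (S (?k m))\<bar> < 1 / Suc p * ?k m" for p :: nat
    by (rule AE_eventually_S_geom_ceil_close[OF a]) simp
  then have "AE \<omega> in M. \<forall>p. \<forall>\<^sub>F m in sequentially.
      \<bar>S (?k m) \<omega> - expectation (S (?k m))\<bar> < 1 / Suc p * ?k m"
    unfolding AE_all_countable by blast
  then show ?thesis
  proof (rule AE_mp[OF _ AE_I2], intro impI)
    fix \<omega>
    assume close: "\<forall>p. \<forall>\<^sub>F m in sequentially. \<bar>S (?k m) \<omega> - expectation (S (?k m))\<bar> < 1 / Suc p * ?k m"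
    have k_pos: "0 < real (?k m)" for m using geom_ceil_pos[OF a, of m] by simp
    have "(\<lambda>m. S (?k m) \<omega> / ?k m - expectation (S (?k m)) / ?k m) \<longlonglongrightarrow> 0"
    proof (rule LIMSEQ_of_eventually_bounds)
      show "\<forall>\<^sub>F m in sequentially. - (1 / Suc p) \<le> S (?k m) \<omega> / ?k m - expectation (S (?k m)) / ?k m
          \<and> S (?k m) \<omega> / ?k m - expectation (S (?k m)) / ?k m \<le> 1 / Suc p" for p
        using close[rule_format, of p]
        by (elim eventually_mono) (use k_pos in \<open>auto simp: abs_less_iff field_simps\<close>)
    next
      have "(\<lambda>p. 1 / real (Suc p)) \<longlonglongrightarrow> 0"
        by (rule LIMSEQ_Suc[OF lim_1_over_n])
      then show "(\<lambda>p. - (1 / real (Suc p))) \<longlonglongrightarrow> 0" "(\<lambda>p. 1 / real (Suc p)) \<longlonglongrightarrow> 0"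
        using tendsto_minus by force+
    qed
    moreover have "(\<lambda>m. expectation (S (?k m)) / ?k m) \<longlonglongrightarrow> expectation (X 0)"
      using filterlim_compose[OF expectation_S_ratio_tendsto filterlim_geom_ceil[OF a]] by simp
    ultimately show "(\<lambda>m. S (?k m) \<omega> / ?k m) \<longlonglongrightarrow> expectation (X 0)"
      using tendsto_add by fastforce
  qed
qed

lemma AE_S_ratio_tendsto: "AE \<omega> in M. (\<lambda>n. S n \<omega> / n) \<longlonglongrightarrow> expectation (X 0)"
proof -
  define a where "a q = 1 + 1 / real (Suc q)" for q
  have "AE \<omega> in M. \<forall>q. (\<lambda>m. S (geom_ceil (a q) m) \<omega> / geom_ceil (a q) m) \<longlonglongrightarrow> expectation (X 0)"
    unfolding AE_all_countable a_def by (intro allI AE_S_geom_ceil_tendsto) simp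
  then show ?thesis
  proof (rule AE_mp[OF _ AE_I2], intro impI)
    fix \<omega>
    assume "\<forall>q. (\<lambda>m. S (geom_ceil (a q) m) \<omega> / geom_ceil (a q) m) \<longlonglongrightarrow> expectation (X 0)"
    moreover have "incseq (\<lambda>n. S n \<omega>)"
      unfolding S_def by (intro incseq_SucI) (simp add: XT_nonneg)
    moreover have "(\<lambda>q. a q) \<longlonglongrightarrow> 1"
      unfolding a_def using LIMSEQ_Suc[OF lim_1_over_n] tendsto_add[of "\<lambda>_. 1" 1 _ _ 0] by auto
    ultimately show "(\<lambda>n. S n \<omega> / n) \<longlonglongrightarrow> expectation (X 0)"
      by (intro LIMSEQ_ratio_of_geom_ceil_subsequences) (auto simp: S_def XT_nonneg sum_nonneg a_def)
  qed
qed

theorem strong_law_nonneg: "AE \<omega> in M. (\<lambda>n. (\<Sum>t<n. X t \<omega>) / n) \<longlonglongrightarrow> expectation (X 0)"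
  using AE_eventually_X_eq_XT AE_S_ratio_tendsto
proof eventually_elim
  case (elim \<omega>)
  then obtain N where N: "\<And>k. k \<ge> N \<Longrightarrow> X k \<omega> = XT k \<omega>"
    unfolding eventually_sequentially by blast
  define c where "c = (\<Sum>k<N. X k \<omega> - XT k \<omega>)"
  have "(\<Sum>t<n. X t \<omega>) = S n \<omega> + c" if "n \<ge> N" for n
  proof -
    have "(\<Sum>t<n. X t \<omega>) - S n \<omega> = (\<Sum>t<n. X t \<omega> - XT t \<omega>)" unfolding S_def by (simp add: sum_subtractf)
    also have "\<dots> = c" unfolding c_def using that N by (intro sum.mono_neutral_right) auto
    finally show ?thesis by simp
  qed
  then have "\<forall>\<^sub>F n in sequentially. S n \<omega> / n + c / n = (\<Sum>t<n. X t \<omega>) / n"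
    unfolding eventually_sequentially by (intro exI[of _ N]) (auto simp: add_divide_distrib)
  moreover have "(\<lambda>n. S n \<omega> / n + c / n) \<longlonglongrightarrow> expectation (X 0)"
    using tendsto_add[OF elim(2) lim_const_over_n[of c]] by simp
  ultimately show ?case by (rule Lim_transform_eventually[rotated])
qed

end

context prob_space
begin

lemma distr_comp_eq:
  assumes "V t \<in> measurable M N" "V 0 \<in> measurable M N" "distr M N (V t) = distr M N (V 0)"
    and "g \<in> measurable N K"
  shows "distr M K (\<lambda>\<omega>. g (V t \<omega>)) = distr M K (\<lambda>\<omega>. g (V 0 \<omega>))"
  using distr_distr[OF assms(4,1)] distr_distr[OF assms(4,2)] assms(3) by (simp add: comp_def)

lemma AE_comp_eq_of_identically_distributed:
  fixes V :: "nat \<Rightarrow> 'a \<Rightarrow> 'b" and c :: real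
  assumes V: "\<And>t. V t \<in> measurable M N" "\<And>t. distr M N (V t) = distr M N (V 0)"
    and h [measurable]: "h \<in> borel_measurable N" and AE0: "AE \<omega> in M. h (V 0 \<omega>) = c"
  shows "AE \<omega> in M. \<forall>t. h (V t \<omega>) = c"
proof -
  have "AE \<omega> in M. h (V t \<omega>) = c" for t
  proof -
    have "(AE \<omega> in M. h (V t \<omega>) = c) \<longleftrightarrow> (AE x in distr M N (V t). h x = c)"
      by (rule AE_distr_iff[symmetric, OF V(1)]) simp
    also have "\<dots> \<longleftrightarrow> (AE x in distr M N (V 0). h x = c)" by (simp only: V(2)[of t])
    also have "\<dots> \<longleftrightarrow> (AE \<omega> in M. h (V 0 \<omega>) = c)"
      by (rule AE_distr_iff[OF V(1)]) simp
    finally show ?thesis using AE0 by simp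
  qed
  then show ?thesis by (simp add: AE_all_countable)
qed

lemma iid_nonneg_comp:
  fixes V :: "nat \<Rightarrow> 'a \<Rightarrow> 'b" and h :: "'b \<Rightarrow> real"
  assumes indep: "indep_vars (\<lambda>_. N) V UNIV"
    and distr: "\<And>t. distr M N (V t) = distr M N (V 0)"
    and h: "h \<in> borel_measurable N" "\<And>x. 0 \<le> h x" "integrable M (\<lambda>\<omega>. h (V 0 \<omega>))"
  shows "iid_nonneg M (\<lambda>t \<omega>. h (V t \<omega>))"
proof unfold_locales
  have V: "V t \<in> measurable M N" for t using indep unfolding indep_vars_def by auto
  show "indep_vars (\<lambda>_. borel) (\<lambda>t \<omega>. h (V t \<omega>)) UNIV"
    using indep_vars_compose2[OF indep, of "\<lambda>_. h"] h(1) by simp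
  show "distr M borel (\<lambda>\<omega>. h (V t \<omega>)) = distr M borel (\<lambda>\<omega>. h (V 0 \<omega>))" for t
    by (rule distr_comp_eq) (use V distr h(1) in auto)
qed (use h in auto)

theorem strong_law_of_large_numbers:
  fixes V :: "nat \<Rightarrow> 'a \<Rightarrow> 'b" and g :: "'b \<Rightarrow> real"
  assumes indep: "indep_vars (\<lambda>_. N) V UNIV"
    and distr: "\<And>t. distr M N (V t) = distr M N (V 0)"
    and g [measurable]: "g \<in> borel_measurable N" and int: "integrable M (\<lambda>\<omega>. g (V 0 \<omega>))"
  shows "AE \<omega> in M. (\<lambda>n. (\<Sum>t<n. g (V t \<omega>)) / n) \<longlonglongrightarrow> expectation (\<lambda>\<omega>. g (V 0 \<omega>))"
proof -
  have measurable_parts: "(\<lambda>x. max (g x) 0) \<in> borel_measurable N" "(\<lambda>x. max (- g x) 0) \<in> borel_measurable N"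
    by measurable
  have integrable_parts: "integrable M (\<lambda>\<omega>. max (g (V 0 \<omega>)) 0)" "integrable M (\<lambda>\<omega>. max (- g (V 0 \<omega>)) 0)"
    using int by auto
  have "expectation (\<lambda>\<omega>. g (V 0 \<omega>)) = expectation (\<lambda>\<omega>. max (g (V 0 \<omega>)) 0 - max (- g (V 0 \<omega>)) 0)"
    by (rule Bochner_Integration.integral_cong) auto
  also have "\<dots> = expectation (\<lambda>\<omega>. max (g (V 0 \<omega>)) 0) - expectation (\<lambda>\<omega>. max (- g (V 0 \<omega>)) 0)"
    by (rule Bochner_Integration.integral_diff[OF integrable_parts])
  finally have expectation_parts: "expectation (\<lambda>\<omega>. g (V 0 \<omega>))
      = expectation (\<lambda>\<omega>. max (g (V 0 \<omega>)) 0) - expectation (\<lambda>\<omega>. max (- g (V 0 \<omega>)) 0)" .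
  have average_parts: "(\<Sum>t<n. g (V t \<omega>)) / n
      = (\<Sum>t<n. max (g (V t \<omega>)) 0) / n - (\<Sum>t<n. max (- g (V t \<omega>)) 0) / n" for n \<omega>
  proof -
    have "(\<Sum>t<n. g (V t \<omega>)) = (\<Sum>t<n. max (g (V t \<omega>)) 0) - (\<Sum>t<n. max (- g (V t \<omega>)) 0)"
      by (simp only: sum_subtractf[symmetric]) (rule sum.cong, auto)
    then show ?thesis by (simp add: diff_divide_distrib)
  qed
  have "AE \<omega> in M. (\<lambda>n. (\<Sum>t<n. max (g (V t \<omega>)) 0) / n) \<longlonglongrightarrow> expectation (\<lambda>\<omega>. max (g (V 0 \<omega>)) 0)"
    using iid_nonneg.strong_law_nonneg[OF iid_nonneg_comp[OF indep distr measurable_parts(1) _ integrable_parts(1)]] by simp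
  moreover have "AE \<omega> in M. (\<lambda>n. (\<Sum>t<n. max (- g (V t \<omega>)) 0) / n) \<longlonglongrightarrow> expectation (\<lambda>\<omega>. max (- g (V 0 \<omega>)) 0)"
    using iid_nonneg.strong_law_nonneg[OF iid_nonneg_comp[OF indep distr measurable_parts(2) _ integrable_parts(2)]] by simp
  ultimately show ?thesis
    unfolding expectation_parts average_parts by eventually_elim (rule tendsto_diff)
qed

end

section \<open>Strong consistency of the sample correlation\<close>

lemma scov_eq_moments:
  assumes n: "n > 0"
  shows "scov n a b = (\<Sum>t<n. a t * b t) / n - smean n a * smean n b"
proof -
  define A where "A = smean n a"
  define B where "B = smean n b"
  have sa: "(\<Sum>t<n. a t) = n * A" and sb: "(\<Sum>t<n. b t) = n * B"
    unfolding A_def B_def smean_def using n by simp_all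
  have "(\<Sum>t<n. (a t - A) * (b t - B)) = (\<Sum>t<n. a t * b t) - B * (\<Sum>t<n. a t) - A * (\<Sum>t<n. b t) + n * A * B"
    by (simp add: algebra_simps sum.distrib sum_subtractf sum_distrib_left sum_distrib_right)
  also have "\<dots> = (\<Sum>t<n. a t * b t) - n * A * B" unfolding sa sb by (simp add: algebra_simps)
  finally show ?thesis unfolding scov_def A_def[symmetric] B_def[symmetric] using n by (simp add: field_simps)
qed

lemma svar_eq_scov: "svar n a = scov n a a"
  unfolding svar_def scov_def by (simp add: power2_eq_square)

lemma svar_const: "(\<And>t. a t = c) \<Longrightarrow> svar n a = 0"
  unfolding svar_def smean_def by (cases "n = 0") simp_all

lemma scor_tendsto_of_moments:
  assumes "(\<lambda>n. smean n a) \<longlonglongrightarrow> ma" "(\<lambda>n. smean n b) \<longlonglongrightarrow> mb"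
    and "(\<lambda>n. (\<Sum>t<n. a t * a t) / n) \<longlonglongrightarrow> maa" "(\<lambda>n. (\<Sum>t<n. b t * b t) / n) \<longlonglongrightarrow> mbb"
    and "(\<lambda>n. (\<Sum>t<n. a t * b t) / n) \<longlonglongrightarrow> mab"
    and "(maa - ma * ma) * (mbb - mb * mb) \<noteq> 0"
  shows "(\<lambda>n. scor n a b) \<longlonglongrightarrow> (mab - ma * mb) / sqrt ((maa - ma * ma) * (mbb - mb * mb))"
proof -
  have "\<forall>\<^sub>F n in sequentially. ((\<Sum>t<n. a t * b t) / n - smean n a * smean n b)
      / sqrt (((\<Sum>t<n. a t * a t) / n - smean n a * smean n a) * ((\<Sum>t<n. b t * b t) / n - smean n b * smean n b))
      = scor n a b"
    unfolding eventually_sequentially scor_def svar_eq_scov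
    by (intro exI[of _ 1] allI impI) (simp only: scov_eq_moments)
  moreover have "((\<lambda>n. ((\<Sum>t<n. a t * b t) / n - smean n a * smean n b)
      / sqrt (((\<Sum>t<n. a t * a t) / n - smean n a * smean n a) * ((\<Sum>t<n. b t * b t) / n - smean n b * smean n b)))
      \<longlonglongrightarrow> (mab - ma * mb) / sqrt ((maa - ma * ma) * (mbb - mb * mb)))"
    using assms by (intro tendsto_intros) auto
  ultimately show ?thesis by (rule Lim_transform_eventually[rotated])
qed

context prob_space
begin

lemma AE_svar_eq_0_of_pvar_eq_0:
  fixes V :: "nat \<Rightarrow> 'a \<Rightarrow> 'b" and h :: "'b \<Rightarrow> real"
  assumes V: "\<And>t. V t \<in> measurable M N" "\<And>t. distr M N (V t) = distr M N (V 0)"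
    and h [measurable]: "h \<in> borel_measurable N" and h2: "integrable M (\<lambda>\<omega>. (h (V 0 \<omega>))^2)"
    and pvar0: "pvar M (\<lambda>\<omega>. h (V 0 \<omega>)) = 0"
  shows "AE \<omega> in M. \<forall>n. svar n (\<lambda>t. h (V t \<omega>)) = 0"
proof -
  let ?c = "expectation (\<lambda>\<omega>. h (V 0 \<omega>))"
  have [measurable]: "V 0 \<in> measurable M N" by (rule V(1))
  have "integrable M (\<lambda>\<omega>. (h (V 0 \<omega>) + (- ?c))^2)"
    using h2 by (intro integrable_square_add) auto
  then have "AE \<omega> in M. (h (V 0 \<omega>) - ?c)^2 = 0"
    using pvar0 integral_nonneg_eq_0_iff_AE[where f="\<lambda>\<omega>. (h (V 0 \<omega>) - ?c)^2"]
    unfolding pvar_def pcov_def by (simp add: power2_eq_square)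
  then have "AE \<omega> in M. h (V 0 \<omega>) = ?c" by simp
  then have "AE \<omega> in M. \<forall>t. h (V t \<omega>) = ?c"
    by (rule AE_comp_eq_of_identically_distributed[where V=V and h=h, OF V h])
  then show ?thesis by (auto intro: svar_const)
qed

lemma AE_scor_eq_0_of_pvar_eq_0:
  fixes V :: "nat \<Rightarrow> 'a \<Rightarrow> 'b" and f g :: "'b \<Rightarrow> real"
  assumes V: "\<And>t. V t \<in> measurable M N" "\<And>t. distr M N (V t) = distr M N (V 0)"
    and f: "f \<in> borel_measurable N" "integrable M (\<lambda>\<omega>. (f (V 0 \<omega>))^2)"
    and g: "g \<in> borel_measurable N" "integrable M (\<lambda>\<omega>. (g (V 0 \<omega>))^2)"
    and degenerate: "pvar M (\<lambda>\<omega>. f (V 0 \<omega>)) = 0 \<or> pvar M (\<lambda>\<omega>. g (V 0 \<omega>)) = 0"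
  shows "AE \<omega> in M. \<forall>n. scor n (\<lambda>t. f (V t \<omega>)) (\<lambda>t. g (V t \<omega>)) = 0"
  using degenerate
proof
  assume "pvar M (\<lambda>\<omega>. f (V 0 \<omega>)) = 0"
  then have "AE \<omega> in M. \<forall>n. svar n (\<lambda>t. f (V t \<omega>)) = 0"
    by (rule AE_svar_eq_0_of_pvar_eq_0[where V=V and h=f, OF V f])
  then show ?thesis by (rule AE_mp) (auto intro!: AE_I2 simp: scor_def)
next
  assume "pvar M (\<lambda>\<omega>. g (V 0 \<omega>)) = 0"
  then have "AE \<omega> in M. \<forall>n. svar n (\<lambda>t. g (V t \<omega>)) = 0"
    by (rule AE_svar_eq_0_of_pvar_eq_0[where V=V and h=g, OF V g])
  then show ?thesis by (rule AE_mp) (auto intro!: AE_I2 simp: scor_def)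
qed

lemma scor_strongly_consistent_nondegenerate:
  fixes V :: "nat \<Rightarrow> 'a \<Rightarrow> 'b" and f g :: "'b \<Rightarrow> real"
  assumes indep: "indep_vars (\<lambda>_. N) V UNIV"
    and distr: "\<And>t. distr M N (V t) = distr M N (V 0)"
    and f [measurable]: "f \<in> borel_measurable N" and g [measurable]: "g \<in> borel_measurable N"
    and f2: "integrable M (\<lambda>\<omega>. (f (V 0 \<omega>))^2)" and g2: "integrable M (\<lambda>\<omega>. (g (V 0 \<omega>))^2)"
    and nondegenerate: "pvar M (\<lambda>\<omega>. f (V 0 \<omega>)) * pvar M (\<lambda>\<omega>. g (V 0 \<omega>)) \<noteq> 0"
  shows "AE \<omega> in M. (\<lambda>n. scor n (\<lambda>t. f (V t \<omega>)) (\<lambda>t. g (V t \<omega>)))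
    \<longlonglongrightarrow> pcor M (\<lambda>\<omega>. f (V 0 \<omega>)) (\<lambda>\<omega>. g (V 0 \<omega>))"
proof -
  have V [measurable]: "V t \<in> measurable M N" for t using indep unfolding indep_vars_def by auto
  let ?f = "\<lambda>\<omega>. f (V 0 \<omega>)" and ?g = "\<lambda>\<omega>. g (V 0 \<omega>)"
  have moments: "AE \<omega> in M. (\<lambda>n. (\<Sum>t<n. h (V t \<omega>)) / n) \<longlonglongrightarrow> expectation (\<lambda>\<omega>. h (V 0 \<omega>))"
    if "h \<in> borel_measurable N" "integrable M (\<lambda>\<omega>. h (V 0 \<omega>))" for h
    using strong_law_of_large_numbers[OF indep distr that] .
  have "integrable M ?f" "integrable M ?g"
    using f2 g2 by (auto intro: square_integrable_imp_integrable)
  moreover have "integrable M (\<lambda>\<omega>. ?f \<omega> * ?f \<omega>)" "integrable M (\<lambda>\<omega>. ?g \<omega> * ?g \<omega>)"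
    "integrable M (\<lambda>\<omega>. ?f \<omega> * ?g \<omega>)"
    using f2 g2 by (auto intro: integrable_mult_of_square_integrable)
  ultimately have lim: "AE \<omega> in M. (\<lambda>n. smean n (\<lambda>t. f (V t \<omega>))) \<longlonglongrightarrow> expectation ?f
      \<and> (\<lambda>n. smean n (\<lambda>t. g (V t \<omega>))) \<longlonglongrightarrow> expectation ?g
      \<and> (\<lambda>n. (\<Sum>t<n. f (V t \<omega>) * f (V t \<omega>)) / n) \<longlonglongrightarrow> expectation (\<lambda>\<omega>. ?f \<omega> * ?f \<omega>)
      \<and> (\<lambda>n. (\<Sum>t<n. g (V t \<omega>) * g (V t \<omega>)) / n) \<longlonglongrightarrow> expectation (\<lambda>\<omega>. ?g \<omega> * ?g \<omega>)
      \<and> (\<lambda>n. (\<Sum>t<n. f (V t \<omega>) * g (V t \<omega>)) / n) \<longlonglongrightarrow> expectation (\<lambda>\<omega>. ?f \<omega> * ?g \<omega>)"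
    unfolding smean_def by (intro AE_conjI moments) simp_all
  have pcor_eq: "pcor M ?f ?g = (expectation (\<lambda>\<omega>. ?f \<omega> * ?g \<omega>) - expectation ?f * expectation ?g)
      / sqrt ((expectation (\<lambda>\<omega>. ?f \<omega> * ?f \<omega>) - expectation ?f * expectation ?f)
            * (expectation (\<lambda>\<omega>. ?g \<omega> * ?g \<omega>) - expectation ?g * expectation ?g))"
    unfolding pcor_def pvar_def using f2 g2 by (simp add: pcov_eq_expectation)
  from nondegenerate have den: "(expectation (\<lambda>\<omega>. ?f \<omega> * ?f \<omega>) - expectation ?f * expectation ?f)
      * (expectation (\<lambda>\<omega>. ?g \<omega> * ?g \<omega>) - expectation ?g * expectation ?g) \<noteq> 0"
    unfolding pvar_def using f2 g2 by (simp add: pcov_eq_expectation)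
  from lim show ?thesis
  proof eventually_elim
    case (elim \<omega>)
    with den show ?case unfolding pcor_eq by (elim conjE) (rule scor_tendsto_of_moments; assumption)
  qed
qed

theorem scor_strongly_consistent:
  fixes V :: "nat \<Rightarrow> 'a \<Rightarrow> 'b" and f g :: "'b \<Rightarrow> real"
  assumes indep: "indep_vars (\<lambda>_. N) V UNIV"
    and distr: "\<And>t. distr M N (V t) = distr M N (V 0)"
    and f: "f \<in> borel_measurable N" and g: "g \<in> borel_measurable N"
    and f2: "integrable M (\<lambda>\<omega>. (f (V 0 \<omega>))^2)" and g2: "integrable M (\<lambda>\<omega>. (g (V 0 \<omega>))^2)"
  shows "AE \<omega> in M. (\<lambda>n. scor n (\<lambda>t. f (V t \<omega>)) (\<lambda>t. g (V t \<omega>)))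
    \<longlonglongrightarrow> pcor M (\<lambda>\<omega>. f (V 0 \<omega>)) (\<lambda>\<omega>. g (V 0 \<omega>))"
proof (cases "pvar M (\<lambda>\<omega>. f (V 0 \<omega>)) = 0 \<or> pvar M (\<lambda>\<omega>. g (V 0 \<omega>)) = 0")
  case True
  have V: "V t \<in> measurable M N" for t using indep unfolding indep_vars_def by auto
  \<comment> \<open>both correlations vanish by the convention \<open>x / 0 = 0\<close>\<close>
  from True have "pcor M (\<lambda>\<omega>. f (V 0 \<omega>)) (\<lambda>\<omega>. g (V 0 \<omega>)) = 0" unfolding pcor_def by auto
  moreover have "AE \<omega> in M. \<forall>n. scor n (\<lambda>t. f (V t \<omega>)) (\<lambda>t. g (V t \<omega>)) = 0"
    by (rule AE_scor_eq_0_of_pvar_eq_0[where V=V, OF V distr f f2 g g2 True])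
  then have "AE \<omega> in M. (\<lambda>n. scor n (\<lambda>t. f (V t \<omega>)) (\<lambda>t. g (V t \<omega>))) \<longlonglongrightarrow> 0"
    by (rule AE_mp) (auto intro!: AE_I2)
  ultimately show ?thesis by simp
next
  case False
  then show ?thesis by (intro scor_strongly_consistent_nondegenerate[OF indep distr f g f2 g2]) simp
qed

end

section \<open>Cluster means\<close>

context prob_space
begin

lemma pcov_cluster_means:
  fixes f :: "'i \<Rightarrow> 'a \<Rightarrow> real" and g :: "'j \<Rightarrow> 'a \<Rightarrow> real"
  assumes "finite I" "finite J"
    and "\<And>i. i \<in> I \<Longrightarrow> f i \<in> borel_measurable M" "\<And>i. i \<in> I \<Longrightarrow> integrable M (\<lambda>x. (f i x)^2)"
    and "\<And>j. j \<in> J \<Longrightarrow> g j \<in> borel_measurable M" "\<And>j. j \<in> J \<Longrightarrow> integrable M (\<lambda>x. (g j x)^2)"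
  shows "pcov M (\<lambda>x. (\<Sum>i\<in>I. f i x) / real (card I)) (\<lambda>x. (\<Sum>j\<in>J. g j x) / real (card J))
    = (\<Sum>i\<in>I. \<Sum>j\<in>J. pcov M (f i) (g j)) / (real (card I) * real (card J))"
  using pcov_divide[of "\<lambda>x. \<Sum>i\<in>I. f i x" "card I" "\<lambda>x. \<Sum>j\<in>J. g j x" "card J"] pcov_sum[OF assms]
  by simp

lemma pcov_add_add:
  fixes f g h k :: "'a \<Rightarrow> real"
  assumes "f \<in> borel_measurable M" "g \<in> borel_measurable M" "h \<in> borel_measurable M" "k \<in> borel_measurable M"
    and "integrable M (\<lambda>x. (f x)^2)" "integrable M (\<lambda>x. (g x)^2)"
      "integrable M (\<lambda>x. (h x)^2)" "integrable M (\<lambda>x. (k x)^2)"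
  shows "pcov M (\<lambda>x. f x + g x) (\<lambda>x. h x + k x) = pcov M f h + pcov M f k + pcov M g h + pcov M g k"
proof -
  have "pcov M (\<lambda>x. f x + g x) (\<lambda>x. h x + k x) = pcov M f (\<lambda>x. h x + k x) + pcov M g (\<lambda>x. h x + k x)"
    using assms by (intro pcov_add_left integrable_square_add) auto
  also have "pcov M f (\<lambda>x. h x + k x) = pcov M f h + pcov M f k"
    using assms pcov_add_left[of h k f] by (simp add: pcov_commute[of f])
  also have "pcov M g (\<lambda>x. h x + k x) = pcov M g h + pcov M g k"
    using assms pcov_add_left[of h k g] by (simp add: pcov_commute[of g])
  finally show ?thesis by simp
qed

lemma pvar_cluster_mean:
  fixes X e :: "'i \<Rightarrow> 'a \<Rightarrow> real" and \<eta> :: "'i \<Rightarrow> 'i \<Rightarrow> real" and \<sigma> \<gamma> :: real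
  assumes I: "finite I" "I \<noteq> {}"
    and meas: "\<And>i. i \<in> I \<Longrightarrow> X i \<in> borel_measurable M \<and> e i \<in> borel_measurable M"
    and sq: "\<And>i. i \<in> I \<Longrightarrow> integrable M (\<lambda>x. (X i x)^2) \<and> integrable M (\<lambda>x. (e i x)^2)"
    and \<sigma>: "\<sigma> > 0" and var_X: "\<And>i. i \<in> I \<Longrightarrow> pvar M (X i) = \<sigma>^2"
    and var_e: "\<And>i. i \<in> I \<Longrightarrow> pvar M (e i) = \<gamma>^2"
    and unc_ee: "\<And>i i'. i \<in> I \<Longrightarrow> i' \<in> I \<Longrightarrow> i \<noteq> i' \<Longrightarrow> pcov M (e i) (e i') = 0"
    and unc_eX: "\<And>i i'. i \<in> I \<Longrightarrow> i' \<in> I \<Longrightarrow> pcov M (e i) (X i') = 0"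
    and cor: "\<And>i i'. i \<in> I \<Longrightarrow> i' \<in> I \<Longrightarrow> pcor M (X i) (X i') = \<eta> i i'"
  shows "pvar M (\<lambda>x. (\<Sum>i\<in>I. X i x + e i x) / card I)
    = \<sigma>^2 * ((\<Sum>i\<in>I. \<Sum>i'\<in>I. \<eta> i i') / real (card I)^2 + \<gamma>^2 / (real (card I) * \<sigma>^2))"
proof -
  have pcov_Y: "pcov M (\<lambda>x. X i x + e i x) (\<lambda>x. X i' x + e i' x) = \<sigma>^2 * \<eta> i i' + (if i = i' then \<gamma>^2 else 0)"
    if "i \<in> I" "i' \<in> I" for i i'
  proof -
    have "pcov M (\<lambda>x. X i x + e i x) (\<lambda>x. X i' x + e i' x)
        = pcov M (X i) (X i') + pcov M (X i) (e i') + pcov M (e i) (X i') + pcov M (e i) (e i')"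
      using that meas sq by (intro pcov_add_add) auto
    moreover have "pcov M (X i) (X i') = \<sigma>^2 * \<eta> i i'"
      using pcov_of_pcor[OF var_X var_X \<sigma> \<sigma>] cor that by (simp add: power2_eq_square)
    moreover have "pcov M (X i) (e i') = 0" "pcov M (e i) (X i') = 0"
      using unc_eX that by (simp_all add: pcov_commute[of "X i"])
    moreover have "pcov M (e i) (e i') = (if i = i' then \<gamma>^2 else 0)"
      using var_e unc_ee that unfolding pvar_def by auto
    ultimately show ?thesis by simp
  qed
  have "pvar M (\<lambda>x. (\<Sum>i\<in>I. X i x + e i x) / card I)
      = (\<Sum>i\<in>I. \<Sum>i'\<in>I. pcov M (\<lambda>x. X i x + e i x) (\<lambda>x. X i' x + e i' x)) / (real (card I) * real (card I))"
    unfolding pvar_def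
    by (rule pcov_cluster_means) (use I meas sq in \<open>auto intro!: borel_measurable_add integrable_square_add\<close>)
  also have "\<dots> = (\<Sum>i\<in>I. \<Sum>i'\<in>I. \<sigma>^2 * \<eta> i i' + (if i = i' then \<gamma>^2 else 0)) / (real (card I) * real (card I))"
    by (simp add: pcov_Y cong: sum.cong)
  also have "\<dots> = (\<sigma>^2 * (\<Sum>i\<in>I. \<Sum>i'\<in>I. \<eta> i i') + real (card I) * \<gamma>^2) / (real (card I) * real (card I))"
    using I by (simp add: sum.distrib sum_distrib_left)
  finally show ?thesis using I \<sigma> by (simp add: field_simps power2_eq_square)
qed

lemma pcov_cluster_means_cross:
  fixes X e :: "'i \<Rightarrow> 'a \<Rightarrow> real" and X' e' :: "'j \<Rightarrow> 'a \<Rightarrow> real" and \<sigma> \<sigma>' \<rho> :: real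
  assumes IJ: "finite I" "I \<noteq> {}" "finite J" "J \<noteq> {}"
    and meas: "\<And>i. i \<in> I \<Longrightarrow> X i \<in> borel_measurable M \<and> e i \<in> borel_measurable M"
      "\<And>j. j \<in> J \<Longrightarrow> X' j \<in> borel_measurable M \<and> e' j \<in> borel_measurable M"
    and sq: "\<And>i. i \<in> I \<Longrightarrow> integrable M (\<lambda>x. (X i x)^2) \<and> integrable M (\<lambda>x. (e i x)^2)"
      "\<And>j. j \<in> J \<Longrightarrow> integrable M (\<lambda>x. (X' j x)^2) \<and> integrable M (\<lambda>x. (e' j x)^2)"
    and \<sigma>: "\<sigma> > 0" "\<sigma>' > 0" and var: "\<And>i. i \<in> I \<Longrightarrow> pvar M (X i) = \<sigma>^2" "\<And>j. j \<in> J \<Longrightarrow> pvar M (X' j) = \<sigma>'^2"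
    and unc: "\<And>i j. i \<in> I \<Longrightarrow> j \<in> J \<Longrightarrow> pcov M (e i) (e' j) = 0"
      "\<And>i j. i \<in> I \<Longrightarrow> j \<in> J \<Longrightarrow> pcov M (e i) (X' j) = 0"
      "\<And>i j. i \<in> I \<Longrightarrow> j \<in> J \<Longrightarrow> pcov M (e' j) (X i) = 0"
    and cor: "\<And>i j. i \<in> I \<Longrightarrow> j \<in> J \<Longrightarrow> pcor M (X i) (X' j) = \<rho>"
  shows "pcov M (\<lambda>x. (\<Sum>i\<in>I. X i x + e i x) / card I) (\<lambda>x. (\<Sum>j\<in>J. X' j x + e' j x) / card J)
    = \<rho> * (\<sigma> * \<sigma>')"
proof -
  have pcov_Y: "pcov M (\<lambda>x. X i x + e i x) (\<lambda>x. X' j x + e' j x) = \<rho> * (\<sigma> * \<sigma>')" if "i \<in> I" "j \<in> J" for i j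
  proof -
    have "pcov M (\<lambda>x. X i x + e i x) (\<lambda>x. X' j x + e' j x)
        = pcov M (X i) (X' j) + pcov M (X i) (e' j) + pcov M (e i) (X' j) + pcov M (e i) (e' j)"
      using that meas sq by (intro pcov_add_add) auto
    then show ?thesis
      using pcov_of_pcor[OF var(1)[OF that(1)] var(2)[OF that(2)] \<sigma>] cor unc that
      by (simp add: pcov_commute[of "X i"])
  qed
  have "pcov M (\<lambda>x. (\<Sum>i\<in>I. X i x + e i x) / card I) (\<lambda>x. (\<Sum>j\<in>J. X' j x + e' j x) / card J)
      = (\<Sum>i\<in>I. \<Sum>j\<in>J. pcov M (\<lambda>x. X i x + e i x) (\<lambda>x. X' j x + e' j x)) / (real (card I) * real (card J))"
    by (rule pcov_cluster_means) (use IJ meas sq in \<open>auto intro!: borel_measurable_add integrable_square_add\<close>)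
  also have "\<dots> = (\<Sum>i\<in>I. \<Sum>j\<in>J. \<rho> * (\<sigma> * \<sigma>')) / (real (card I) * real (card J))"
    by (simp add: pcov_Y cong: sum.cong)
  finally show ?thesis using IJ by simp
qed

lemma pcor_cluster_means:
  fixes X e :: "'i \<Rightarrow> 'a \<Rightarrow> real" and X' e' :: "'j \<Rightarrow> 'a \<Rightarrow> real"
    and \<eta> :: "'i \<Rightarrow> 'i \<Rightarrow> real" and \<eta>' :: "'j \<Rightarrow> 'j \<Rightarrow> real" and \<sigma> \<sigma>' \<gamma> \<gamma>' \<rho> :: real
  assumes IJ: "finite I" "I \<noteq> {}" "finite J" "J \<noteq> {}"
    and meas: "\<And>i. i \<in> I \<Longrightarrow> X i \<in> borel_measurable M \<and> e i \<in> borel_measurable M"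
      "\<And>j. j \<in> J \<Longrightarrow> X' j \<in> borel_measurable M \<and> e' j \<in> borel_measurable M"
    and sq: "\<And>i. i \<in> I \<Longrightarrow> integrable M (\<lambda>x. (X i x)^2) \<and> integrable M (\<lambda>x. (e i x)^2)"
      "\<And>j. j \<in> J \<Longrightarrow> integrable M (\<lambda>x. (X' j x)^2) \<and> integrable M (\<lambda>x. (e' j x)^2)"
    and \<sigma>: "\<sigma> > 0" "\<sigma>' > 0"
    and var: "\<And>i. i \<in> I \<Longrightarrow> pvar M (X i) = \<sigma>^2" "\<And>j. j \<in> J \<Longrightarrow> pvar M (X' j) = \<sigma>'^2"
      "\<And>i. i \<in> I \<Longrightarrow> pvar M (e i) = \<gamma>^2" "\<And>j. j \<in> J \<Longrightarrow> pvar M (e' j) = \<gamma>'^2"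
    and unc: "\<And>i i'. i \<in> I \<Longrightarrow> i' \<in> I \<Longrightarrow> i \<noteq> i' \<Longrightarrow> pcov M (e i) (e i') = 0"
      "\<And>j j'. j \<in> J \<Longrightarrow> j' \<in> J \<Longrightarrow> j \<noteq> j' \<Longrightarrow> pcov M (e' j) (e' j') = 0"
      "\<And>i j. i \<in> I \<Longrightarrow> j \<in> J \<Longrightarrow> pcov M (e i) (e' j) = 0"
      "\<And>i i'. i \<in> I \<Longrightarrow> i' \<in> I \<Longrightarrow> pcov M (e i) (X i') = 0"
      "\<And>i j. i \<in> I \<Longrightarrow> j \<in> J \<Longrightarrow> pcov M (e i) (X' j) = 0"
      "\<And>i j. i \<in> I \<Longrightarrow> j \<in> J \<Longrightarrow> pcov M (e' j) (X i) = 0"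
      "\<And>j j'. j \<in> J \<Longrightarrow> j' \<in> J \<Longrightarrow> pcov M (e' j) (X' j') = 0"
    and cor: "\<And>i i'. i \<in> I \<Longrightarrow> i' \<in> I \<Longrightarrow> pcor M (X i) (X i') = \<eta> i i'"
      "\<And>j j'. j \<in> J \<Longrightarrow> j' \<in> J \<Longrightarrow> pcor M (X' j) (X' j') = \<eta>' j j'"
      "\<And>i j. i \<in> I \<Longrightarrow> j \<in> J \<Longrightarrow> pcor M (X i) (X' j) = \<rho>"
  shows "pcor M (\<lambda>x. (\<Sum>i\<in>I. X i x + e i x) / card I) (\<lambda>x. (\<Sum>j\<in>J. X' j x + e' j x) / card J)
    = \<rho> / sqrt (((\<Sum>i\<in>I. \<Sum>i'\<in>I. \<eta> i i') / real (card I)^2 + \<gamma>^2 / (real (card I) * \<sigma>^2))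
              * ((\<Sum>j\<in>J. \<Sum>j'\<in>J. \<eta>' j j') / real (card J)^2 + \<gamma>'^2 / (real (card J) * \<sigma>'^2)))"
proof -
  define VA where "VA = (\<Sum>i\<in>I. \<Sum>i'\<in>I. \<eta> i i') / real (card I)^2 + \<gamma>^2 / (real (card I) * \<sigma>^2)"
  define VB where "VB = (\<Sum>j\<in>J. \<Sum>j'\<in>J. \<eta>' j j') / real (card J)^2 + \<gamma>'^2 / (real (card J) * \<sigma>'^2)"
  have "pvar M (\<lambda>x. (\<Sum>i\<in>I. X i x + e i x) / card I) = \<sigma>^2 * VA"
    unfolding VA_def using IJ meas sq \<sigma> var unc cor by (intro pvar_cluster_mean) auto
  moreover have "pvar M (\<lambda>x. (\<Sum>j\<in>J. X' j x + e' j x) / card J) = \<sigma>'^2 * VB"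
    unfolding VB_def using IJ meas sq \<sigma> var unc cor by (intro pvar_cluster_mean) auto
  moreover have "pcov M (\<lambda>x. (\<Sum>i\<in>I. X i x + e i x) / card I) (\<lambda>x. (\<Sum>j\<in>J. X' j x + e' j x) / card J)
      = \<rho> * (\<sigma> * \<sigma>')"
    using IJ meas sq \<sigma> var unc cor by (intro pcov_cluster_means_cross) auto
  moreover have "sqrt (\<sigma>^2 * VA * (\<sigma>'^2 * VB)) = \<sigma> * \<sigma>' * sqrt (VA * VB)"
    using \<sigma> by (simp add: real_sqrt_mult)
  ultimately show ?thesis
    using \<sigma> unfolding pcor_def VA_def[symmetric] VB_def[symmetric] by simp
qed

lemma scor_coordinate_means_strongly_consistent:
  fixes W :: "nat \<Rightarrow> 'a \<Rightarrow> 'k \<Rightarrow> real"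
  assumes indep: "indep_vars (\<lambda>_. PiM K (\<lambda>_. borel)) W UNIV"
    and distr: "\<And>t. distr M (PiM K (\<lambda>_. borel)) (W t) = distr M (PiM K (\<lambda>_. borel)) (W 0)"
    and AB: "finite A" "A \<subseteq> K" "finite B" "B \<subseteq> K"
    and sq: "\<And>k. k \<in> A \<union> B \<Longrightarrow> integrable M (\<lambda>\<omega>. (W 0 \<omega> k)^2)"
  shows "AE \<omega> in M. (\<lambda>n. scor n (\<lambda>t. (\<Sum>k\<in>A. W t \<omega> k) / card A) (\<lambda>t. (\<Sum>k\<in>B. W t \<omega> k) / card B))
    \<longlonglongrightarrow> pcor M (\<lambda>\<omega>. (\<Sum>k\<in>A. W 0 \<omega> k) / card A) (\<lambda>\<omega>. (\<Sum>k\<in>B. W 0 \<omega> k) / card B)"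
proof -
  define mean where "mean C v = (\<Sum>k\<in>C. v k) / real (card C)" for C and v :: "'k \<Rightarrow> real"
  have W: "W 0 \<in> measurable M (PiM K (\<lambda>_. borel))" using indep unfolding indep_vars_def by auto
  have measurable_mean: "mean C \<in> borel_measurable (PiM K (\<lambda>_. borel))" if "C \<subseteq> K" for C
    unfolding mean_def using that by (auto intro!: borel_measurable_divide borel_measurable_sum)
  have "integrable M (\<lambda>\<omega>. (mean C (W 0 \<omega>))^2)" if "finite C" "C \<subseteq> K" "C \<subseteq> A \<union> B" for C
    unfolding mean_def power_divide using that sq
    by (auto intro!: integrable_divide_zero integrable_square_sum measurable_compose[OF W])
  then show ?thesis
    using scor_strongly_consistent[where V=W and f="mean A" and g="mean B", OF indep distr] measurable_mean AB
    unfolding mean_def by auto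
qed

end

lemma obsvec_Inl: "i < NA \<Longrightarrow> obsvec NA NB YA YB \<omega> (Inl i) = YA i \<omega>"
  and obsvec_Inr: "j < NB \<Longrightarrow> obsvec NA NB YA YB \<omega> (Inr j) = YB j \<omega>"
  unfolding obsvec_def by auto

theorem theorem2:
  fixes M :: "'a measure"
    and NA NB :: nat
    and XA eA XB eB :: "nat \<Rightarrow> nat \<Rightarrow> 'a \<Rightarrow> real"  \<comment> \<open>time t, voxel index, outcome\<close>
    and \<sigma>A \<sigma>B \<gamma>A \<gamma>B \<rho> :: real
    and \<eta>A \<eta>B :: "nat \<Rightarrow> nat \<Rightarrow> real"
    and \<nu>A \<nu>B :: "nat set"
  defines "YA \<equiv> \<lambda>t i \<omega>. XA t i \<omega> + eA t i \<omega>"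
      and "YB \<equiv> \<lambda>t j \<omega>. XB t j \<omega> + eB t j \<omega>"
  assumes prob: "prob_space M"
    and rv: "\<And>t i. i < NA \<Longrightarrow> XA t i \<in> borel_measurable M \<and> eA t i \<in> borel_measurable M"
    and rvB: "\<And>t j. j < NB \<Longrightarrow> XB t j \<in> borel_measurable M \<and> eB t j \<in> borel_measurable M"
    and sq: "\<And>t i. i < NA \<Longrightarrow> integrable M (\<lambda>\<omega>. (XA t i \<omega>)^2) \<and> integrable M (\<lambda>\<omega>. (eA t i \<omega>)^2)"
    and sqB: "\<And>t j. j < NB \<Longrightarrow> integrable M (\<lambda>\<omega>. (XB t j \<omega>)^2) \<and> integrable M (\<lambda>\<omega>. (eB t j \<omega>)^2)"
    and \<sigma>A_pos: "\<sigma>A > 0" and \<sigma>B_pos: "\<sigma>B > 0"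
    and varXA: "\<And>t i. i < NA \<Longrightarrow> pvar M (XA t i) = \<sigma>A^2"
    and varXB: "\<And>t j. j < NB \<Longrightarrow> pvar M (XB t j) = \<sigma>B^2"
    and vareA: "\<And>t i. i < NA \<Longrightarrow> pvar M (eA t i) = \<gamma>A^2"
    and vareB: "\<And>t j. j < NB \<Longrightarrow> pvar M (eB t j) = \<gamma>B^2"
    and unc_eAeA: "\<And>t i i'. i < NA \<Longrightarrow> i' < NA \<Longrightarrow> i \<noteq> i' \<Longrightarrow> pcov M (eA t i) (eA t i') = 0"
    and unc_eBeB: "\<And>t j j'. j < NB \<Longrightarrow> j' < NB \<Longrightarrow> j \<noteq> j' \<Longrightarrow> pcov M (eB t j) (eB t j') = 0"
    and unc_eAeB: "\<And>t i j. i < NA \<Longrightarrow> j < NB \<Longrightarrow> pcov M (eA t i) (eB t j) = 0"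
    and unc_eAXA: "\<And>t i i'. i < NA \<Longrightarrow> i' < NA \<Longrightarrow> pcov M (eA t i) (XA t i') = 0"
    and unc_eAXB: "\<And>t i j. i < NA \<Longrightarrow> j < NB \<Longrightarrow> pcov M (eA t i) (XB t j) = 0"
    and unc_eBXA: "\<And>t i j. i < NA \<Longrightarrow> j < NB \<Longrightarrow> pcov M (eB t j) (XA t i) = 0"
    and unc_eBXB: "\<And>t j j'. j < NB \<Longrightarrow> j' < NB \<Longrightarrow> pcov M (eB t j) (XB t j') = 0"
    and etaA: "\<And>t i i'. i < NA \<Longrightarrow> i' < NA \<Longrightarrow> pcor M (XA t i) (XA t i') = \<eta>A i i'"
    and etaB: "\<And>t j j'. j < NB \<Longrightarrow> j' < NB \<Longrightarrow> pcor M (XB t j) (XB t j') = \<eta>B j j'"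
    and corAB: "\<And>t i j. i < NA \<Longrightarrow> j < NB \<Longrightarrow> pcor M (XA t i) (XB t j) = \<rho>"
    and indep: "prob_space.indep_vars M (\<lambda>_. PiM ({..<NA} <+> {..<NB}) (\<lambda>_. borel))
                  (\<lambda>t. obsvec NA NB (YA t) (YB t)) UNIV"
    and ident: "\<And>t. distr M (PiM ({..<NA} <+> {..<NB}) (\<lambda>_. borel)) (obsvec NA NB (YA t) (YB t))
                    = distr M (PiM ({..<NA} <+> {..<NB}) (\<lambda>_. borel)) (obsvec NA NB (YA 0) (YB 0))"
    and \<nu>A: "\<nu>A \<subseteq> {..<NA}" "\<nu>A \<noteq> {}"
    and \<nu>B: "\<nu>B \<subseteq> {..<NB}" "\<nu>B \<noteq> {}"
  shows "AE \<omega> in M.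
     (\<lambda>n. scor n (\<lambda>t. (\<Sum>i\<in>\<nu>A. YA t i \<omega>) / real (card \<nu>A))
                  (\<lambda>t. (\<Sum>j\<in>\<nu>B. YB t j \<omega>) / real (card \<nu>B)))
     \<longlonglongrightarrow> \<rho> / sqrt (((\<Sum>i\<in>\<nu>A. \<Sum>i'\<in>\<nu>A. \<eta>A i i') / real (card \<nu>A)^2
                        + \<gamma>A^2 / (real (card \<nu>A) * \<sigma>A^2))
                     * ((\<Sum>j\<in>\<nu>B. \<Sum>j'\<in>\<nu>B. \<eta>B j j') / real (card \<nu>B)^2
                        + \<gamma>B^2 / (real (card \<nu>B) * \<sigma>B^2)))"
proof -
  interpret prob_space M by (rule prob)
  let ?W = "\<lambda>t. obsvec NA NB (YA t) (YB t)"
  have ltA: "\<And>i. i \<in> \<nu>A \<Longrightarrow> i < NA" and ltB: "\<And>j. j \<in> \<nu>B \<Longrightarrow> j < NB"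
    and fin: "finite \<nu>A" "finite \<nu>B"
    using \<nu>A \<nu>B finite_subset by auto
  have cluster_means: "(\<Sum>k\<in>Inl ` \<nu>A. ?W t \<omega> k) / card (Inl ` \<nu>A) = (\<Sum>i\<in>\<nu>A. YA t i \<omega>) / card \<nu>A"
    "(\<Sum>k\<in>Inr ` \<nu>B. ?W t \<omega> k) / card (Inr ` \<nu>B) = (\<Sum>j\<in>\<nu>B. YB t j \<omega>) / card \<nu>B" for t \<omega>
    by (simp_all add: sum.reindex card_image obsvec_Inl obsvec_Inr ltA ltB cong: sum.cong)
  have "integrable M (\<lambda>\<omega>. (?W 0 \<omega> k)^2)" if "k \<in> Inl ` \<nu>A \<union> Inr ` \<nu>B" for k
    using that ltA ltB rv rvB sq sqB
    by (auto simp: obsvec_Inl obsvec_Inr YA_def YB_def intro!: integrable_square_add)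
  with scor_coordinate_means_strongly_consistent[OF indep ident, of "Inl ` \<nu>A" "Inr ` \<nu>B"] \<nu>A \<nu>B fin
  have "AE \<omega> in M. (\<lambda>n. scor n (\<lambda>t. (\<Sum>i\<in>\<nu>A. YA t i \<omega>) / card \<nu>A) (\<lambda>t. (\<Sum>j\<in>\<nu>B. YB t j \<omega>) / card \<nu>B))
      \<longlonglongrightarrow> pcor M (\<lambda>\<omega>. (\<Sum>i\<in>\<nu>A. YA 0 i \<omega>) / card \<nu>A) (\<lambda>\<omega>. (\<Sum>j\<in>\<nu>B. YB 0 j \<omega>) / card \<nu>B)"
    unfolding cluster_means by auto
  moreover have "pcor M (\<lambda>\<omega>. (\<Sum>i\<in>\<nu>A. YA 0 i \<omega>) / card \<nu>A) (\<lambda>\<omega>. (\<Sum>j\<in>\<nu>B. YB 0 j \<omega>) / card \<nu>B)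
      = \<rho> / sqrt (((\<Sum>i\<in>\<nu>A. \<Sum>i'\<in>\<nu>A. \<eta>A i i') / real (card \<nu>A)^2 + \<gamma>A^2 / (real (card \<nu>A) * \<sigma>A^2))
                 * ((\<Sum>j\<in>\<nu>B. \<Sum>j'\<in>\<nu>B. \<eta>B j j') / real (card \<nu>B)^2 + \<gamma>B^2 / (real (card \<nu>B) * \<sigma>B^2)))"
    unfolding YA_def YB_def
    by (rule pcor_cluster_means)
       (simp_all add: fin \<nu>A \<nu>B ltA ltB rv rvB sq sqB \<sigma>A_pos \<sigma>B_pos varXA varXB vareA vareB
         unc_eAeA unc_eBeB unc_eAeB unc_eAXA unc_eAXB unc_eBXA unc_eBXB etaA etaB corAB)
  ultimately show ?thesis by simp
qed

end
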